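(* Fix $p\ge1$ and assume one of the following: (1) $(X_{it})$ is an iid field of regularly varying random variables with index $\alpha\in(0,4)$, and $\mathbb E[X]=0$ if $\mathbb E|X|<\infty$; (2) $(X_{it})$ is the stochastic volatility model $X_{it}=\sigma_{it}Z_{it}$ satisfying the hypotheses (1)–(3) below, and $\mathbb E[Z]=0$ if $\mathbb E|Z|<\infty$: (i) $Z$ is regularly varying with index $\alpha\in(0,4)\setminus\{2\}$; (ii) $((\sigma_{1t},\dots,\sigma_{pt}))_{t\ge1}$ is strongly mixing with rate $(\alpha_h)$, $\sum_h\alpha_h^{\delta/(2+\delta)}<\infty$ for some $\delta>0$; (iii) $\mathbb E[\sigma^{2\max(2+\delta,\alpha+\epsilon)}]<\infty$ for some $\epsilon>0$. Then $$a_n^{-2}\big\|\mathbf X^n(\mathbf X^n)'-\operatorname{diag}(\mathbf X^n(\mathbf X^n)')\big\|_2\xrightarrow{\mathbb P}0,$$ where $\|\cdot\|_2$ is the spectral norm, $\operatorname{diag}(\mathbf A)$ is the diagonal matrix with the diagonal of $\mathbf A$, and $(a_n)$ satisfies $n\,\mathbb P(|X|>a_n)\to1$.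
   Context: Stochastic volatility model: $X_{it}=\sigma_{it}Z_{it}$, with $(Z_{it})$ an iid field independent of a strictly stationary ergodic field $(\sigma_{it})$ of non-negative random variables; $Z,\sigma,X$ generic elements. A real random variable $W$ is regularly varying with index $\alpha$ if $\mathbb P(W>x)\sim p_+L(x)x^{-\alpha}$, $\mathbb P(W<-x)\sim p_-L(x)x^{-\alpha}$, $p_++p_-=1$, $L$ slowly varying. $\mathbf X^n=(X_{it})_{1\le i\le p,\,1\le t\le n}\in\mathbb R^{p\times n}$, so $\mathbf X^n(\mathbf X^n)'=(S_{ij})$ with $S_{ij}=\sum_{t=1}^nX_{it}X_{jt}$. *)

theory Defs
  imports "HOL-Probability.Probability"
begin

definition slowly_varying :: "(real \<Rightarrow> real) \<Rightarrow> bool" where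
  "slowly_varying L \<longleftrightarrow>
     L \<in> borel_measurable borel \<and>
     eventually (\<lambda>x. L x > 0) at_top \<and>
     (\<forall>c>0. ((\<lambda>x. L (c * x) / L x) \<longlongrightarrow> 1) at_top)"

definition regularly_varying :: "'a measure \<Rightarrow> ('a \<Rightarrow> real) \<Rightarrow> real \<Rightarrow> bool" where
  "regularly_varying M W \<alpha> \<longleftrightarrow>
     W \<in> borel_measurable M \<and>
     (\<exists>L pp pm. slowly_varying L \<and> pp \<ge> 0 \<and> pm \<ge> 0 \<and> pp + pm = 1 \<and>
       ((\<lambda>x. measure M {\<omega> \<in> space M. W \<omega> > x} / (L x * x powr (-\<alpha>))) \<longlongrightarrow> pp) at_top \<and>
       ((\<lambda>x. measure M {\<omega> \<in> space M. W \<omega> < - x} / (L x * x powr (-\<alpha>))) \<longlongrightarrow> pm) at_top)"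

definition pos_idx :: "(nat \<times> nat) set" where
  "pos_idx = {(i, t). i \<ge> 1 \<and> t \<ge> 1}"

definition iid_field :: "'a measure \<Rightarrow> (nat \<Rightarrow> nat \<Rightarrow> 'a \<Rightarrow> real) \<Rightarrow> bool" where
  "iid_field M Y \<longleftrightarrow>
     prob_space.indep_vars M (\<lambda>_. borel) (\<lambda>(i, t). Y i t) pos_idx \<and>
     (\<forall>(i, t) \<in> pos_idx. distr M borel (Y i t) = distr M borel (Y 1 1))"

definition field_law :: "'a measure \<Rightarrow> (nat \<Rightarrow> nat \<Rightarrow> 'a \<Rightarrow> real) \<Rightarrow> (nat \<times> nat \<Rightarrow> real) measure" where
  "field_law M Y = distr M (Pi\<^sub>M UNIV (\<lambda>_. borel)) (\<lambda>\<omega> (i, t). Y (Suc i) (Suc t) \<omega>)"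

definition field_shift :: "nat \<Rightarrow> nat \<Rightarrow> (nat \<times> nat \<Rightarrow> real) \<Rightarrow> (nat \<times> nat \<Rightarrow> real)" where
  "field_shift a b f = (\<lambda>(i, t). f (i + a, t + b))"

definition strictly_stationary_field :: "'a measure \<Rightarrow> (nat \<Rightarrow> nat \<Rightarrow> 'a \<Rightarrow> real) \<Rightarrow> bool" where
  "strictly_stationary_field M Y \<longleftrightarrow>
     (\<forall>i t. i \<ge> 1 \<longrightarrow> t \<ge> 1 \<longrightarrow> Y i t \<in> borel_measurable M) \<and>
     (\<forall>a b. distr (field_law M Y) (Pi\<^sub>M UNIV (\<lambda>_. borel)) (field_shift a b) = field_law M Y)"

definition ergodic_field :: "'a measure \<Rightarrow> (nat \<Rightarrow> nat \<Rightarrow> 'a \<Rightarrow> real) \<Rightarrow> bool" where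
  "ergodic_field M Y \<longleftrightarrow>
     (\<forall>B \<in> sets (Pi\<^sub>M UNIV (\<lambda>_. borel)).
        (\<forall>a b. field_shift a b -` B \<inter> space (Pi\<^sub>M UNIV (\<lambda>(_::nat\<times>nat). (borel::real measure))) = B) \<longrightarrow>
        measure (field_law M Y) B = 0 \<or> measure (field_law M Y) B = 1)"

definition generated_event ::
  "'a measure \<Rightarrow> (nat \<Rightarrow> nat \<Rightarrow> 'a \<Rightarrow> real) \<Rightarrow> nat \<Rightarrow> nat set \<Rightarrow> 'a set \<Rightarrow> bool" where
  "generated_event M Y p T A \<longleftrightarrow>
     (\<exists>C \<in> sets (Pi\<^sub>M ({1..p} \<times> T) (\<lambda>_. borel)).
        A = {\<omega> \<in> space M. (\<lambda>j\<in>{1..p} \<times> T. Y (fst j) (snd j) \<omega>) \<in> C})"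

definition strongly_mixing_rate ::
  "'a measure \<Rightarrow> (nat \<Rightarrow> nat \<Rightarrow> 'a \<Rightarrow> real) \<Rightarrow> nat \<Rightarrow> (nat \<Rightarrow> real) \<Rightarrow> bool" where
  "strongly_mixing_rate M Y p \<alpha>h \<longleftrightarrow>
     (\<alpha>h \<longlonglongrightarrow> 0) \<and> (\<forall>h. \<alpha>h h \<ge> 0) \<and>
     (\<forall>k h A B. k \<ge> 1 \<longrightarrow> h \<ge> 1 \<longrightarrow>
        generated_event M Y p {1..k} A \<longrightarrow> generated_event M Y p {k + h..} B \<longrightarrow>
        \<bar>measure M (A \<inter> B) - measure M A * measure M B\<bar> \<le> \<alpha>h h)"

definition spectral_norm :: "nat \<Rightarrow> (nat \<Rightarrow> nat \<Rightarrow> real) \<Rightarrow> real" where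
  "spectral_norm p A = Sup {sqrt (\<Sum>i=1..p. (\<Sum>j=1..p. A i j * x j)\<^sup>2) | x. (\<Sum>j=1..p. (x j)\<^sup>2) = 1}"

text \<open>Convergence in probability to 0 (stated with outer probability, so no measurability of Y n
  is presupposed; for measurable Y n it is the usual notion).\<close>
definition tendsto_in_prob_zero :: "'a measure \<Rightarrow> (nat \<Rightarrow> 'a \<Rightarrow> real) \<Rightarrow> bool" where
  "tendsto_in_prob_zero M Y \<longleftrightarrow>
     (\<forall>\<epsilon>>0. \<forall>\<eta>>0. eventually (\<lambda>n. \<exists>A \<in> sets M.
         {\<omega> \<in> space M. \<bar>Y n \<omega>\<bar> > \<epsilon>} \<subseteq> A \<and> measure M A < \<eta>) sequentially)"

definition iid_model :: "'a measure \<Rightarrow> (nat \<Rightarrow> nat \<Rightarrow> 'a \<Rightarrow> real) \<Rightarrow> bool" where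
  "iid_model M X \<longleftrightarrow>
     iid_field M X \<and>
     (\<exists>\<alpha>. 0 < \<alpha> \<and> \<alpha> < 4 \<and> regularly_varying M (X 1 1) \<alpha>) \<and>
     (integrable M (X 1 1) \<longrightarrow> integral\<^sup>L M (X 1 1) = 0)"

definition sv_model :: "'a measure \<Rightarrow> nat \<Rightarrow> (nat \<Rightarrow> nat \<Rightarrow> 'a \<Rightarrow> real) \<Rightarrow> bool" where
  "sv_model M p X \<longleftrightarrow>
     (\<exists>\<sigma> Z. (\<forall>i t \<omega>. X i t \<omega> = \<sigma> i t \<omega> * Z i t \<omega>) \<and>
        iid_field M Z \<and>
        strictly_stationary_field M \<sigma> \<and> ergodic_field M \<sigma> \<and>
        (\<forall>i t. i \<ge> 1 \<longrightarrow> t \<ge> 1 \<longrightarrow> (\<forall>\<omega>\<in>space M. \<sigma> i t \<omega> \<ge> 0)) \<and>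
        prob_space.indep_var M
          (Pi\<^sub>M UNIV (\<lambda>_. borel)) (\<lambda>\<omega> (i, t). Z (Suc i) (Suc t) \<omega>)
          (Pi\<^sub>M UNIV (\<lambda>_. borel)) (\<lambda>\<omega> (i, t). \<sigma> (Suc i) (Suc t) \<omega>) \<and>
        (integrable M (Z 1 1) \<longrightarrow> integral\<^sup>L M (Z 1 1) = 0) \<and>
        (\<exists>\<alpha>. 0 < \<alpha> \<and> \<alpha> < 4 \<and> \<alpha> \<noteq> 2 \<and> regularly_varying M (Z 1 1) \<alpha> \<and>
          (\<exists>\<delta> > 0. (\<exists>\<alpha>h. strongly_mixing_rate M \<sigma> p \<alpha>h \<and>
                          summable (\<lambda>h. \<alpha>h (Suc h) powr (\<delta> / (2 + \<delta>)))) \<and>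
             (\<exists>\<epsilon> > 0. integrable M (\<lambda>\<omega>. \<sigma> 1 1 \<omega> powr (2 * max (2 + \<delta>) (\<alpha> + \<epsilon>)))))))"

end

theory Submission
  imports Defs
begin

text \<open>The spectral norm of a p \<times> p matrix is at most the sum of the absolute values of its
  entries, so it suffices that each off-diagonal entry S = (\<Sum>t. X i t * X j t) (i \<noteq> j) is
  o(a n ^ 2) in probability. The products X i t * X j t have moments of every order r < \<alpha>,
  while n * a n powr -\<gamma> \<rightarrow> 0 for every \<gamma> > \<alpha>. So for an exponent r with r < \<alpha> < 2 r
  it is enough to bound P(|S| > b) by K n / b powr r for all b > 0. For r \<le> 1 this follows
  from the subadditivity of x \<mapsto> x powr r. In the iid model with \<alpha> \<ge> 2 the products are
  independent and centred, and truncation at level b gives the bound with 1 \<le> r < 2. In the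
  stochastic volatility model with \<alpha> > 2 they are uncorrelated with finite variance, because
  the noise field is independent of the volatility field, and Chebyshev's inequality gives it
  with r = 2.\<close>

section \<open>Regular variation\<close>

definition abs_tail :: "'a measure \<Rightarrow> ('a \<Rightarrow> real) \<Rightarrow> real \<Rightarrow> real" where
  "abs_tail M W x = measure M {\<omega> \<in> space M. \<bar>W \<omega>\<bar> > x}"

lemma (in finite_measure) abs_tail_antimono:
  assumes "W \<in> borel_measurable M" and "x \<le> y"
  shows "abs_tail M W y \<le> abs_tail M W x"
  unfolding abs_tail_def using assms by (intro finite_measure_mono) auto

lemma regularly_varying_measurable:
  "regularly_varying M W \<alpha> \<Longrightarrow> W \<in> borel_measurable M"
  unfolding regularly_varying_def by simp

lemma (in prob_space) abs_tail_regularly_varying_asymp: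
  assumes rv: "regularly_varying M W \<alpha>"
  obtains L where "slowly_varying L" "((\<lambda>x. abs_tail M W x / (L x * x powr -\<alpha>)) \<longlongrightarrow> 1) at_top"
proof -
  have [measurable]: "W \<in> borel_measurable M" using rv by (rule regularly_varying_measurable)
  obtain L pp pm where sv: "slowly_varying L" and pp: "pp + pm = 1"
    and lp: "((\<lambda>x. prob {\<omega> \<in> space M. W \<omega> > x} / (L x * x powr -\<alpha>)) \<longlongrightarrow> pp) at_top"
    and lm: "((\<lambda>x. prob {\<omega> \<in> space M. W \<omega> < - x} / (L x * x powr -\<alpha>)) \<longlongrightarrow> pm) at_top"
    using rv unfolding regularly_varying_def by blast
  define h where "h x = L x * x powr -\<alpha>" for x
  have split: "abs_tail M W x = prob {\<omega> \<in> space M. W \<omega> > x} + prob {\<omega> \<in> space M. W \<omega> < - x}"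
    if "0 \<le> x" for x
  proof -
    have "{\<omega> \<in> space M. \<bar>W \<omega>\<bar> > x} = {\<omega> \<in> space M. W \<omega> > x} \<union> {\<omega> \<in> space M. W \<omega> < - x}"
      using that by auto
    moreover have "{\<omega> \<in> space M. W \<omega> > x} \<inter> {\<omega> \<in> space M. W \<omega> < - x} = {}"
      using that by auto
    ultimately show ?thesis unfolding abs_tail_def by (simp add: finite_measure_Union)
  qed
  have "((\<lambda>x. prob {\<omega> \<in> space M. W \<omega> > x} / h x + prob {\<omega> \<in> space M. W \<omega> < - x} / h x)
      \<longlongrightarrow> 1) at_top"
    using tendsto_add[OF lp lm] pp unfolding h_def by simp
  moreover have "eventually (\<lambda>x. prob {\<omega> \<in> space M. W \<omega> > x} / h x
      + prob {\<omega> \<in> space M. W \<omega> < - x} / h x = abs_tail M W x / h x) at_top"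
    using eventually_ge_at_top[of 0] by eventually_elim (simp add: split add_divide_distrib)
  ultimately have "((\<lambda>x. abs_tail M W x / h x) \<longlongrightarrow> 1) at_top" by (rule Lim_transform_eventually)
  with sv show ?thesis unfolding h_def by (rule that)
qed

lemma (in prob_space) abs_tail_regularly_varying:
  assumes rv: "regularly_varying M W \<alpha>"
  shows abs_tail_regularly_varying_ratio:
      "((\<lambda>x. abs_tail M W (2 * x) / abs_tail M W x) \<longlongrightarrow> 2 powr -\<alpha>) at_top"
    and abs_tail_regularly_varying_pos: "eventually (\<lambda>x. 0 < abs_tail M W x) at_top"
proof -
  obtain L where sv: "slowly_varying L"
    and Fh: "((\<lambda>x. abs_tail M W x / (L x * x powr -\<alpha>)) \<longlongrightarrow> 1) at_top"
    using abs_tail_regularly_varying_asymp[OF rv] .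
  define F where "F = abs_tail M W"
  define h where "h x = L x * x powr -\<alpha>" for x
  note Fh = Fh[folded F_def h_def]
  have double: "filterlim (\<lambda>x::real. 2 * x) at_top at_top"
    by (intro filterlim_tendsto_pos_mult_at_top[OF tendsto_const] filterlim_ident) simp
  have L_ratio: "((\<lambda>x. L (2 * x) / L x) \<longlongrightarrow> 1) at_top"
    using sv unfolding slowly_varying_def by simp
  have L_pos: "eventually (\<lambda>x. L x > 0) at_top"
    using sv unfolding slowly_varying_def by simp
  have "eventually (\<lambda>x. 1/2 < F x / h x) at_top"
    using Fh by (rule order_tendstoD) simp
  then have ev: "eventually (\<lambda>x. 0 < x \<and> 0 < L x \<and> 0 < L (2 * x) \<and> 1/2 < F x / h x) at_top"
    using L_pos filterlim_iff[THEN iffD1, OF double, rule_format, OF L_pos] eventually_gt_at_top[of 0]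
    by eventually_elim auto
  have F_pos: "eventually (\<lambda>x. 0 < h x \<and> 0 < F x) at_top"
    using ev
  proof eventually_elim
    case (elim x)
    then have "0 < h x" by (simp add: h_def)
    moreover have "0 < F x / h x" using elim by linarith
    ultimately show ?case by (simp add: zero_less_divide_iff)
  qed
  then show "eventually (\<lambda>x. 0 < abs_tail M W x) at_top"
    unfolding F_def by (rule eventually_mono) simp
  \<comment> \<open>F(2x)/F(x) = (F(2x)/h(2x)) (L(2x)/L(x)) 2^-\<alpha> / (F(x)/h(x)), each factor having a limit\<close>
  have "((\<lambda>x. (F (2 * x) / h (2 * x)) * (L (2 * x) / L x) * 2 powr -\<alpha> / (F x / h x))
      \<longlongrightarrow> 1 * 1 * 2 powr -\<alpha> / 1) at_top"
    by (intro tendsto_intros filterlim_compose[OF Fh double] L_ratio Fh) auto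
  moreover have "eventually (\<lambda>x. (F (2 * x) / h (2 * x)) * (L (2 * x) / L x) * 2 powr -\<alpha> / (F x / h x)
      = F (2 * x) / F x) at_top"
    using ev F_pos
  proof eventually_elim
    case (elim x)
    then have "0 < h x" "0 < F x" by simp_all
    moreover have "h (2 * x) = L (2 * x) * 2 powr -\<alpha> * x powr -\<alpha>"
      using elim by (simp add: h_def powr_mult)
    ultimately show ?case using elim by (simp add: h_def field_simps)
  qed
  ultimately show "((\<lambda>x. abs_tail M W (2 * x) / abs_tail M W x) \<longlongrightarrow> 2 powr -\<alpha>) at_top"
    unfolding F_def by (simp add: Lim_transform_eventually)
qed

lemma doubling_descent:
  fixes G :: "real \<Rightarrow> real"
  assumes "0 < x0" and up: "\<And>x. x0 \<le> x \<Longrightarrow> G x \<le> G (2 * x)" and "x0 \<le> x"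
  obtains y where "x0 \<le> y" "y < 2 * x0" "G y \<le> G x"
proof -
  obtain k where "x < 2 ^ k * x0"
    using real_arch_pow[of 2 "x / x0"] \<open>0 < x0\<close> by (auto simp: field_simps)
  then have "\<exists>y. x0 \<le> y \<and> y < 2 * x0 \<and> G y \<le> G x"
    using \<open>x0 \<le> x\<close>
  proof (induction k arbitrary: x)
    case 0
    then show ?case by simp
  next
    case (Suc k)
    show ?case
    proof (cases "x < 2 * x0")
      case True
      then show ?thesis using Suc.prems by auto
    next
      case False
      then have "x0 \<le> x / 2" "x / 2 < 2 ^ k * x0" using Suc.prems by auto
      then obtain y where "x0 \<le> y" "y < 2 * x0" "G y \<le> G (x / 2)" using Suc.IH by blast
      moreover have "G (x / 2) \<le> G x" using up[OF \<open>x0 \<le> x / 2\<close>] by simp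
      ultimately show ?thesis by force
    qed
  qed
  then show ?thesis using that by blast
qed

lemma (in prob_space) abs_tail_regularly_varying_lower:
  assumes rv: "regularly_varying M W \<alpha>" and "\<alpha> < \<beta>" "0 < \<beta>"
  shows "\<exists>c>0. \<exists>x0>0. \<forall>x\<ge>x0. c * x powr -\<beta> \<le> abs_tail M W x"
proof -
  define F where "F = abs_tail M W"
  have "2 powr -\<beta> < 2 powr -\<alpha>" using assms by simp
  then have "eventually (\<lambda>x. 2 powr -\<beta> < F (2 * x) / F x) at_top"
    using order_tendstoD(1)[OF abs_tail_regularly_varying_ratio[OF rv]] unfolding F_def by blast
  then have "eventually (\<lambda>x. 0 < x \<and> 0 < F x \<and> 2 powr -\<beta> < F (2 * x) / F x) at_top"
    using abs_tail_regularly_varying_pos[OF rv] eventually_gt_at_top[of 0]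
    unfolding F_def by eventually_elim auto
  then obtain x0 where x0: "\<And>x. x0 \<le> x \<Longrightarrow> 0 < x \<and> 0 < F x \<and> 2 powr -\<beta> < F (2 * x) / F x"
    unfolding eventually_at_top_linorder by blast
  then have "0 < x0" by blast
  define G where "G x = F x * x powr \<beta>" for x
  have G_up: "G x \<le> G (2 * x)" if "x0 \<le> x" for x
  proof -
    from x0[OF that] have "0 < F x" "2 powr -\<beta> < F (2 * x) / F x" by auto
    then have "2 powr -\<beta> * F x < F (2 * x)" by (simp add: pos_less_divide_eq)
    then have "2 powr -\<beta> * F x * (2 powr \<beta> * x powr \<beta>) \<le> F (2 * x) * (2 powr \<beta> * x powr \<beta>)"
      by (intro mult_right_mono) (simp_all add: less_imp_le)
    then show ?thesis
      using x0[OF that] by (simp add: G_def powr_mult powr_minus field_simps)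
  qed
  define c where "c = F (2 * x0) * x0 powr \<beta>"
  have "c * x powr -\<beta> \<le> F x" if x: "x0 \<le> x" for x
  proof -
    obtain y where y: "x0 \<le> y" "y < 2 * x0" "G y \<le> G x"
      using doubling_descent[of x0 G x, OF \<open>0 < x0\<close> G_up x] .
    have "c \<le> F y * y powr \<beta>"
      unfolding c_def using y \<open>0 < x0\<close> \<open>0 < \<beta>\<close> rv
      by (intro mult_mono abs_tail_antimono[of W, folded F_def] powr_mono2)
        (auto simp: F_def abs_tail_def regularly_varying_measurable)
    then have "c \<le> F x * x powr \<beta>" using y unfolding G_def by linarith
    then show ?thesis using x0[OF x] by (simp add: powr_minus field_simps)
  qed
  moreover have "0 < c" unfolding c_def using x0[of "2 * x0"] \<open>0 < x0\<close> by simp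
  ultimately show ?thesis unfolding F_def using \<open>0 < x0\<close> by blast
qed

lemma (in prob_space) abs_tail_regularly_varying_upper:
  assumes rv: "regularly_varying M W \<alpha>" and "\<gamma> < \<alpha>" "0 < \<gamma>"
  shows "\<exists>C\<ge>0. \<exists>x0>0. \<forall>x\<ge>x0. abs_tail M W x \<le> C * x powr -\<gamma>"
proof -
  define F where "F = abs_tail M W"
  have "2 powr -\<alpha> < 2 powr -\<gamma>" using assms by simp
  then have "eventually (\<lambda>x. F (2 * x) / F x < 2 powr -\<gamma>) at_top"
    using order_tendstoD(2)[OF abs_tail_regularly_varying_ratio[OF rv]] unfolding F_def by blast
  then have "eventually (\<lambda>x. 0 < x \<and> 0 < F x \<and> F (2 * x) / F x < 2 powr -\<gamma>) at_top"
    using abs_tail_regularly_varying_pos[OF rv] eventually_gt_at_top[of 0]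
    unfolding F_def by eventually_elim auto
  then obtain x0 where x0: "\<And>x. x0 \<le> x \<Longrightarrow> 0 < x \<and> 0 < F x \<and> F (2 * x) / F x < 2 powr -\<gamma>"
    unfolding eventually_at_top_linorder by blast
  then have "0 < x0" by blast
  define G where "G x = - (F x * x powr \<gamma>)" for x
  have G_up: "G x \<le> G (2 * x)" if "x0 \<le> x" for x
  proof -
    from x0[OF that] have "0 < F x" "F (2 * x) / F x < 2 powr -\<gamma>" by auto
    then have "F (2 * x) < 2 powr -\<gamma> * F x" by (simp add: pos_divide_less_eq)
    then have "F (2 * x) * (2 powr \<gamma> * x powr \<gamma>) \<le> 2 powr -\<gamma> * F x * (2 powr \<gamma> * x powr \<gamma>)"
      by (intro mult_right_mono) (simp_all add: less_imp_le)
    then show ?thesis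
      using x0[OF that] by (simp add: G_def powr_mult powr_minus field_simps)
  qed
  define C where "C = F x0 * (2 * x0) powr \<gamma>"
  have "F x \<le> C * x powr -\<gamma>" if x: "x0 \<le> x" for x
  proof -
    obtain y where y: "x0 \<le> y" "y < 2 * x0" "G y \<le> G x"
      using doubling_descent[of x0 G x, OF \<open>0 < x0\<close> G_up x] .
    have "F y * y powr \<gamma> \<le> C"
      unfolding C_def using y \<open>0 < x0\<close> \<open>0 < \<gamma>\<close> rv
      by (intro mult_mono abs_tail_antimono[of W, folded F_def] powr_mono2)
        (auto simp: F_def abs_tail_def regularly_varying_measurable)
    then have "F x * x powr \<gamma> \<le> C" using y unfolding G_def by linarith
    then show ?thesis using x0[OF x] by (simp add: powr_minus field_simps)
  qed
  moreover have "0 \<le> C" unfolding C_def F_def abs_tail_def by simp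
  ultimately show ?thesis unfolding F_def using \<open>0 < x0\<close> by blast
qed

lemma abs_powr_le_dyadic_series:
  fixes w :: real
  assumes "0 < x0" "0 < r"
  shows "ennreal (\<bar>w\<bar> powr r) \<le> ennreal (x0 powr r)
           + (\<Sum>k. ennreal ((2 ^ Suc k * x0) powr r) * of_bool (2 ^ k * x0 < \<bar>w\<bar>))"
proof (cases "\<bar>w\<bar> \<le> x0")
  case True
  then have "ennreal (\<bar>w\<bar> powr r) \<le> ennreal (x0 powr r)"
    using assms by (intro ennreal_leI powr_mono2) auto
  then show ?thesis by (rule order_trans) (simp add: add_increasing2)
next
  case False
  obtain n where "\<bar>w\<bar> / x0 < 2 ^ n" using real_arch_pow[of 2 "\<bar>w\<bar> / x0"] by auto
  then have "\<bar>w\<bar> \<le> 2 ^ n * x0" using assms by (simp add: field_simps)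
  then obtain k where k: "2 ^ k * x0 < \<bar>w\<bar>" "\<bar>w\<bar> \<le> 2 ^ Suc k * x0"
    using ex_least_nat_less[of "\<lambda>n. \<bar>w\<bar> \<le> 2 ^ n * x0" n] False by (auto simp: not_le)
  define f where "f k = ennreal ((2 ^ Suc k * x0) powr r) * of_bool (2 ^ k * x0 < \<bar>w\<bar>)" for k
  have "ennreal (\<bar>w\<bar> powr r) \<le> f k"
    using k assms unfolding f_def by (auto intro!: ennreal_leI powr_mono2)
  also have "f k \<le> (\<Sum>k. f k)"
    by (metis ennreal_suminf_lessD not_le order_less_irrefl)
  finally show ?thesis unfolding f_def by (simp add: add_increasing)
qed

lemma dyadic_powr_product:
  fixes x0 r \<gamma> C :: real
  assumes "0 < x0"
  shows "(2 ^ Suc k * x0) powr r * (C * (2 ^ k * x0) powr -\<gamma>)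
           = 2 powr r * x0 powr (r - \<gamma>) * C * (2 powr (r - \<gamma>)) ^ k"
proof -
  have pow2: "((2::real) ^ k) powr s = (2 powr s) ^ k" for s
    by (simp add: powr_realpow[symmetric] powr_powr mult.commute)
  have "(2 ^ Suc k * x0) powr r = 2 powr r * (2 powr r) ^ k * x0 powr r"
    using assms by (simp add: powr_mult pow2)
  moreover have "(2 ^ k * x0) powr -\<gamma> = (2 powr -\<gamma>) ^ k * x0 powr -\<gamma>"
    using assms by (simp add: powr_mult pow2)
  moreover have "(2 powr (r - \<gamma>)) ^ k = (2 powr r) ^ k * (2 powr -\<gamma>) ^ k"
    by (simp add: powr_add[symmetric] power_mult_distrib[symmetric])
  moreover have "x0 powr (r - \<gamma>) = x0 powr r * x0 powr -\<gamma>"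
    by (simp add: powr_add[symmetric])
  ultimately show ?thesis by (simp only: ac_simps)
qed

lemma (in prob_space) integrable_abs_powr_of_abs_tail_le:
  assumes W[measurable]: "W \<in> borel_measurable M" and "0 < r" "r < \<gamma>" "0 < x0" "0 \<le> C"
    and tail: "\<And>x. x0 \<le> x \<Longrightarrow> abs_tail M W x \<le> C * x powr -\<gamma>"
  shows "integrable M (\<lambda>\<omega>. \<bar>W \<omega>\<bar> powr r)"
proof -
  define A where "A k = {\<omega> \<in> space M. 2 ^ k * x0 < \<bar>W \<omega>\<bar>}" for k :: nat
  have [measurable]: "A k \<in> sets M" for k unfolding A_def by measurable
  define u where "u k = (2 ^ Suc k * x0) powr r" for k :: nat
  define q where "q = 2 powr (r - \<gamma>)"
  have q: "0 \<le> q" "q < 1"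
    using powr_less_mono[of "r - \<gamma>" 0 2] assms unfolding q_def by auto
  define K where "K = 2 powr r * x0 powr (r - \<gamma>) * C"
  have "0 \<le> K" unfolding K_def using assms by simp
  \<comment> \<open>the dyadic layers contribute a geometric series with ratio 2^(r-\<gamma>)\<close>
  have layer: "u k * prob (A k) \<le> K * q ^ k" for k
  proof -
    have "prob (A k) \<le> C * (2 ^ k * x0) powr -\<gamma>"
      using tail[of "2 ^ k * x0"] assms unfolding A_def abs_tail_def
      by (simp add: mult_le_cancel_right1)
    then have "u k * prob (A k) \<le> u k * (C * (2 ^ k * x0) powr -\<gamma>)"
      unfolding u_def by (intro mult_left_mono) auto
    also have "\<dots> = K * q ^ k"
      unfolding u_def K_def q_def using \<open>0 < x0\<close> by (rule dyadic_powr_product)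
    finally show ?thesis .
  qed
  have "(\<integral>\<^sup>+\<omega>. ennreal (norm (\<bar>W \<omega>\<bar> powr r)) \<partial>M)
      \<le> (\<integral>\<^sup>+\<omega>. ennreal (x0 powr r) + (\<Sum>k. ennreal (u k) * indicator (A k) \<omega>) \<partial>M)"
    using abs_powr_le_dyadic_series[OF \<open>0 < x0\<close> \<open>0 < r\<close>]
    by (intro nn_integral_mono) (simp add: u_def A_def indicator_def)
  also have "\<dots> = ennreal (x0 powr r) + (\<Sum>k. ennreal (u k) * emeasure M (A k))"
    by (subst nn_integral_add)
      (auto simp: nn_integral_suminf nn_integral_cmult_indicator emeasure_space_1)
  also have "\<dots> \<le> ennreal (x0 powr r) + (\<Sum>k. ennreal (K * q ^ k))"
    using layer by (intro add_mono suminf_le)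
      (auto simp: emeasure_eq_measure ennreal_mult'[symmetric] u_def intro!: ennreal_leI)
  also have "\<dots> < \<infinity>"
  proof -
    have "summable (\<lambda>k. K * q ^ k)" using q by (intro summable_mult summable_geometric) auto
    then have "(\<Sum>k. ennreal (K * q ^ k)) \<noteq> \<top>"
      using \<open>0 \<le> K\<close> q by (intro ennreal_suminf_neq_top) auto
    then show ?thesis by (simp add: less_top)
  qed
  finally have "(\<integral>\<^sup>+\<omega>. ennreal (norm (\<bar>W \<omega>\<bar> powr r)) \<partial>M) < \<infinity>" .
  then show ?thesis by (rule integrableI_bounded[rotated]) measurable
qed

lemma (in prob_space) integrable_abs_powr_regularly_varying:
  assumes rv: "regularly_varying M W \<alpha>" and "0 < r" "r < \<alpha>"
  shows "integrable M (\<lambda>\<omega>. \<bar>W \<omega>\<bar> powr r)"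
proof -
  obtain C x0 where "0 \<le> C" "0 < x0" "\<forall>x\<ge>x0. abs_tail M W x \<le> C * x powr -((r + \<alpha>) / 2)"
    using abs_tail_regularly_varying_upper[OF rv, of "(r + \<alpha>) / 2"] assms by auto
  then show ?thesis
    using assms regularly_varying_measurable[OF rv]
    by (intro integrable_abs_powr_of_abs_tail_le[of W r "(r + \<alpha>) / 2" x0 C]) auto
qed

section \<open>Norming constants\<close>

lemma (in prob_space) norming_seq_tendsto_at_top:
  fixes a :: "nat \<Rightarrow> real"
  assumes [measurable]: "V \<in> borel_measurable M" and pos: "\<And>x. 0 < abs_tail M V x"
    and lim: "(\<lambda>n. real n * abs_tail M V (a n)) \<longlonglongrightarrow> 1"
  shows "filterlim a at_top sequentially"
  unfolding filterlim_at_top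
proof
  fix B :: real
  have "eventually (\<lambda>n. real n * abs_tail M V (a n) < 2) sequentially"
    using lim by (rule order_tendstoD) simp
  moreover have "eventually (\<lambda>n. 2 / abs_tail M V B \<le> real n) sequentially"
    by (rule eventually_ge_at_top[of "nat \<lceil>2 / abs_tail M V B\<rceil>", THEN eventually_mono]) linarith
  ultimately show "eventually (\<lambda>n. B \<le> a n) sequentially"
  proof eventually_elim
    case (elim n)
    \<comment> \<open>otherwise n \<cdot> P(|V| > a n) \<ge> n \<cdot> P(|V| > B) \<ge> 2\<close>
    show ?case
    proof (rule ccontr)
      assume "\<not> B \<le> a n"
      then have "abs_tail M V B \<le> abs_tail M V (a n)" by (intro abs_tail_antimono) auto
      then have "real n * abs_tail M V B \<le> real n * abs_tail M V (a n)"
        by (intro mult_left_mono) auto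
      moreover have "2 \<le> real n * abs_tail M V B"
        using elim pos[of B] by (simp add: field_simps)
      ultimately show False using elim by linarith
    qed
  qed
qed

lemma (in prob_space) norming_seq_powr_tendsto_zero:
  fixes a :: "nat \<Rightarrow> real"
  assumes top: "filterlim a at_top sequentially" and "0 < c" "0 < x0"
    and low: "\<And>x. x0 \<le> x \<Longrightarrow> c * x powr -\<beta> \<le> abs_tail M V x"
    and lim: "(\<lambda>n. real n * abs_tail M V (a n)) \<longlonglongrightarrow> 1" and "\<beta> < \<gamma>"
  shows "(\<lambda>n. real n * a n powr -\<gamma>) \<longlonglongrightarrow> 0"
proof -
  have "eventually (\<lambda>n. x0 \<le> a n) sequentially"
    using top unfolding filterlim_at_top by blast
  moreover have "eventually (\<lambda>n. real n * abs_tail M V (a n) < 2) sequentially"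
    using lim by (rule order_tendstoD) simp
  ultimately have upper: "eventually (\<lambda>n. real n * a n powr -\<gamma> \<le> (2 / c) * a n powr (\<beta> - \<gamma>)) sequentially"
  proof eventually_elim
    case (elim n)
    have "real n * (c * a n powr -\<beta>) \<le> real n * abs_tail M V (a n)"
      using low elim by (intro mult_left_mono) auto
    then have "real n * (c * a n powr -\<beta>) \<le> 2" using elim by linarith
    then have "real n * a n powr -\<beta> * a n powr (\<beta> - \<gamma>) \<le> 2 / c * a n powr (\<beta> - \<gamma>)"
      using \<open>0 < c\<close> by (intro mult_right_mono) (auto simp: field_simps)
    then show ?case using elim \<open>0 < x0\<close> by (simp add: mult.assoc powr_add[symmetric])
  qed
  have "(\<lambda>n. (2 / c) * a n powr (\<beta> - \<gamma>)) \<longlonglongrightarrow> (2 / c) * 0"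
    using \<open>\<beta> < \<gamma>\<close> by (intro tendsto_mult tendsto_const tendsto_neg_powr top) auto
  then show "(\<lambda>n. real n * a n powr -\<gamma>) \<longlonglongrightarrow> 0"
    by (intro tendsto_sandwich[OF _ upper tendsto_const]) auto
qed

lemma prob_abs_gt_sq_tendsto_zero:
  fixes a :: "nat \<Rightarrow> real"
  assumes bound: "\<And>n b. 0 < b \<Longrightarrow> measure M {\<omega> \<in> space M. b < \<bar>S n \<omega>\<bar>} \<le> K * real n / b powr g"
    and "0 < g" and top: "filterlim a at_top sequentially"
    and small: "(\<lambda>n. real n * a n powr (-2 * g)) \<longlonglongrightarrow> 0" and "0 < \<epsilon>"
  shows "(\<lambda>n. measure M {\<omega> \<in> space M. \<epsilon> * (a n)\<^sup>2 < \<bar>S n \<omega>\<bar>}) \<longlonglongrightarrow> 0"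
proof -
  have "eventually (\<lambda>n. 0 < a n) sequentially"
    using top unfolding filterlim_at_top_dense by auto
  then have upper: "eventually (\<lambda>n. measure M {\<omega> \<in> space M. \<epsilon> * (a n)\<^sup>2 < \<bar>S n \<omega>\<bar>}
      \<le> (K / \<epsilon> powr g) * (real n * a n powr (-2 * g))) sequentially"
  proof eventually_elim
    case (elim n)
    have sq: "(a n)\<^sup>2 = a n powr 2" using elim by simp
    have "(\<epsilon> * (a n)\<^sup>2) powr g = \<epsilon> powr g * ((a n)\<^sup>2) powr g"
      using \<open>0 < \<epsilon>\<close> by (simp add: powr_mult)
    also have "((a n)\<^sup>2) powr g = a n powr (2 * g)"
      unfolding sq powr_powr ..
    finally have "(\<epsilon> * (a n)\<^sup>2) powr g = \<epsilon> powr g * a n powr (2 * g)" .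
    moreover have "measure M {\<omega> \<in> space M. \<epsilon> * (a n)\<^sup>2 < \<bar>S n \<omega>\<bar>} \<le> K * real n / (\<epsilon> * (a n)\<^sup>2) powr g"
      using elim \<open>0 < \<epsilon>\<close> by (intro bound) auto
    ultimately show ?case by (simp add: powr_minus_divide)
  qed
  have "(\<lambda>n. (K / \<epsilon> powr g) * (real n * a n powr (-2 * g))) \<longlonglongrightarrow> (K / \<epsilon> powr g) * 0"
    by (intro tendsto_mult tendsto_const small)
  then show ?thesis
    by (intro tendsto_sandwich[OF _ upper tendsto_const]) auto
qed

lemma (in prob_space) prob_abs_gt_norming_sq_tendsto_zero:
  fixes a :: "nat \<Rightarrow> real"
  assumes V: "V \<in> borel_measurable M"
    and lower: "\<forall>\<beta>>\<alpha>. \<exists>c>0. \<exists>x0>0. \<forall>x\<ge>x0. c * x powr -\<beta> \<le> abs_tail M V x"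
    and lim: "(\<lambda>n. real n * abs_tail M V (a n)) \<longlonglongrightarrow> 1"
    and bound: "\<And>n b. 0 < b \<Longrightarrow> prob {\<omega> \<in> space M. b < \<bar>S n \<omega>\<bar>} \<le> K * real n / b powr g"
    and "0 < g" "\<alpha> < 2 * g" "0 < \<epsilon>"
  shows "(\<lambda>n. prob {\<omega> \<in> space M. \<epsilon> * (a n)\<^sup>2 < \<bar>S n \<omega>\<bar>}) \<longlonglongrightarrow> 0"
proof -
  have pos: "0 < abs_tail M V x" for x
  proof -
    obtain c x0 where "0 < c" "0 < x0" "\<forall>x\<ge>x0. c * x powr -(\<alpha> + 1) \<le> abs_tail M V x"
      using lower by (meson less_add_one)
    then have "0 < c * max x x0 powr -(\<alpha> + 1)" "c * max x x0 powr -(\<alpha> + 1) \<le> abs_tail M V (max x x0)"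
      by auto
    then have "0 < abs_tail M V (max x x0)" by linarith
    also have "\<dots> \<le> abs_tail M V x" using V by (intro abs_tail_antimono) auto
    finally show ?thesis .
  qed
  have top: "filterlim a at_top sequentially"
    using V pos lim by (rule norming_seq_tendsto_at_top)
  define \<beta> where "\<beta> = (\<alpha> + 2 * g) / 2"
  obtain c x0 where "0 < c" "0 < x0" and low: "\<forall>x\<ge>x0. c * x powr -\<beta> \<le> abs_tail M V x"
    using lower[rule_format, of \<beta>] \<open>\<alpha> < 2 * g\<close> unfolding \<beta>_def by auto
  have "(\<lambda>n. real n * a n powr -(2 * g)) \<longlonglongrightarrow> 0"
    using \<open>\<alpha> < 2 * g\<close> low
    by (intro norming_seq_powr_tendsto_zero[OF top \<open>0 < c\<close> \<open>0 < x0\<close> _ lim, of \<beta>]) (auto simp: \<beta>_def)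
  then show ?thesis
    using prob_abs_gt_sq_tendsto_zero[OF bound \<open>0 < g\<close> top _ \<open>0 < \<epsilon>\<close>] by simp
qed

section \<open>Tail bounds for sums\<close>

lemma powr_add_le_add_powr:
  fixes x y r :: real
  assumes "0 \<le> x" "0 \<le> y" "0 < r" "r \<le> 1"
  shows "(x + y) powr r \<le> x powr r + y powr r"
proof (cases "x + y = 0")
  case True
  then show ?thesis using assms by auto
next
  case False
  then have s: "0 < x + y" using assms by auto
  have "u \<le> u powr r" if "0 \<le> u" "u \<le> 1" for u :: real
    using that assms by (metis powr_mono' powr_one)
  then have "x / (x + y) + y / (x + y) \<le> (x / (x + y)) powr r + (y / (x + y)) powr r"
    using assms s by (intro add_mono) auto
  also have "x / (x + y) + y / (x + y) = 1" using s by (simp add: add_divide_distrib[symmetric])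
  also have "(x / (x + y)) powr r + (y / (x + y)) powr r = (x powr r + y powr r) / (x + y) powr r"
    using assms s by (simp add: powr_divide add_divide_distrib)
  finally show ?thesis using s by (simp add: field_simps)
qed

lemma powr_sum_le_sum_powr:
  fixes z :: "'i \<Rightarrow> real"
  assumes "\<And>t. t \<in> T \<Longrightarrow> 0 \<le> z t" "0 < r" "r \<le> 1"
  shows "(\<Sum>t\<in>T. z t) powr r \<le> (\<Sum>t\<in>T. z t powr r)"
  using assms(1)
proof (induction T rule: infinite_finite_induct)
  case (insert x F)
  then have "(\<Sum>t\<in>insert x F. z t) powr r \<le> z x powr r + (\<Sum>t\<in>F. z t) powr r"
    using assms by (simp add: powr_add_le_add_powr sum_nonneg)
  also have "\<dots> \<le> z x powr r + (\<Sum>t\<in>F. z t powr r)" using insert by simp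
  finally show ?case using insert by simp
qed simp_all

lemma integrable_abs_mult_powr:
  fixes U V :: "'a \<Rightarrow> real"
  assumes [measurable]: "U \<in> borel_measurable M" "V \<in> borel_measurable M"
    and "0 < r"
    and U: "integrable M (\<lambda>\<omega>. \<bar>U \<omega>\<bar> powr (2 * r))" and V: "integrable M (\<lambda>\<omega>. \<bar>V \<omega>\<bar> powr (2 * r))"
  shows "integrable M (\<lambda>\<omega>. \<bar>U \<omega> * V \<omega>\<bar> powr r)"
    and "(\<integral>\<omega>. \<bar>U \<omega> * V \<omega>\<bar> powr r \<partial>M)
           \<le> ((\<integral>\<omega>. \<bar>U \<omega>\<bar> powr (2 * r) \<partial>M) + (\<integral>\<omega>. \<bar>V \<omega>\<bar> powr (2 * r) \<partial>M)) / 2"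
proof -
  have amgm: "\<bar>u * v\<bar> powr r \<le> (\<bar>u\<bar> powr (2 * r) + \<bar>v\<bar> powr (2 * r)) / 2" for u v :: real
  proof -
    have "\<bar>z\<bar> powr (2 * r) = (\<bar>z\<bar> powr r)\<^sup>2" for z :: real
      by (simp add: power2_eq_square powr_add[symmetric])
    moreover have "2 * (\<bar>u\<bar> powr r) * (\<bar>v\<bar> powr r) \<le> (\<bar>u\<bar> powr r)\<^sup>2 + (\<bar>v\<bar> powr r)\<^sup>2"
      by (rule sum_squares_bound)
    ultimately show ?thesis by (simp add: abs_mult powr_mult)
  qed
  have bound: "integrable M (\<lambda>\<omega>. (\<bar>U \<omega>\<bar> powr (2 * r) + \<bar>V \<omega>\<bar> powr (2 * r)) / 2)"
    using U V by auto
  show int: "integrable M (\<lambda>\<omega>. \<bar>U \<omega> * V \<omega>\<bar> powr r)"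
  proof (rule Bochner_Integration.integrable_bound[OF bound], measurable, rule AE_I2)
    fix \<omega>
    show "norm (\<bar>U \<omega> * V \<omega>\<bar> powr r) \<le> norm ((\<bar>U \<omega>\<bar> powr (2 * r) + \<bar>V \<omega>\<bar> powr (2 * r)) / 2)"
      using amgm[of "U \<omega>" "V \<omega>"] by (metis abs_of_nonneg order_trans powr_ge_zero real_norm_def)
  qed
  have "(\<integral>\<omega>. \<bar>U \<omega> * V \<omega>\<bar> powr r \<partial>M) \<le> (\<integral>\<omega>. (\<bar>U \<omega>\<bar> powr (2 * r) + \<bar>V \<omega>\<bar> powr (2 * r)) / 2 \<partial>M)"
    by (rule integral_mono[OF int bound]) (rule amgm)
  also have "\<dots> = ((\<integral>\<omega>. \<bar>U \<omega>\<bar> powr (2 * r) \<partial>M) + (\<integral>\<omega>. \<bar>V \<omega>\<bar> powr (2 * r) \<partial>M)) / 2"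
    using U V by simp
  finally show "(\<integral>\<omega>. \<bar>U \<omega> * V \<omega>\<bar> powr r \<partial>M)
      \<le> ((\<integral>\<omega>. \<bar>U \<omega>\<bar> powr (2 * r) \<partial>M) + (\<integral>\<omega>. \<bar>V \<omega>\<bar> powr (2 * r) \<partial>M)) / 2" .
qed

lemma abs_powr_two: "\<bar>x\<bar> powr 2 = x\<^sup>2" for x :: real
  by simp

lemma integrable_mult_of_square_integrable:
  fixes U V :: "'a \<Rightarrow> real"
  assumes "U \<in> borel_measurable M" "V \<in> borel_measurable M"
    and "integrable M (\<lambda>\<omega>. (U \<omega>)\<^sup>2)" "integrable M (\<lambda>\<omega>. (V \<omega>)\<^sup>2)"
  shows "integrable M (\<lambda>\<omega>. U \<omega> * V \<omega>)"
  using integrable_abs_mult_powr(1)[of U M V 1] assms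
  by (simp add: abs_powr_two integrable_abs_iff)

context prob_space
begin

lemma prob_abs_sum_gt_le_powr:
  fixes Y :: "'i \<Rightarrow> 'a \<Rightarrow> real"
  assumes "finite T" and "0 < r" "r \<le> 1" and "0 < b"
    and [measurable]: "\<And>t. t \<in> T \<Longrightarrow> Y t \<in> borel_measurable M"
    and int: "\<And>t. t \<in> T \<Longrightarrow> integrable M (\<lambda>\<omega>. \<bar>Y t \<omega>\<bar> powr r)"
    and C: "\<And>t. t \<in> T \<Longrightarrow> (\<integral>\<omega>. \<bar>Y t \<omega>\<bar> powr r \<partial>M) \<le> C"
  shows "prob {\<omega> \<in> space M. b < \<bar>\<Sum>t\<in>T. Y t \<omega>\<bar>} \<le> real (card T) * C / b powr r"
proof -
  have pointwise: "\<bar>\<Sum>t\<in>T. Y t \<omega>\<bar> powr r \<le> (\<Sum>t\<in>T. \<bar>Y t \<omega>\<bar> powr r)" for \<omega>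
  proof -
    have "\<bar>\<Sum>t\<in>T. Y t \<omega>\<bar> powr r \<le> (\<Sum>t\<in>T. \<bar>Y t \<omega>\<bar>) powr r"
      using assms by (intro powr_mono2) auto
    also have "\<dots> \<le> (\<Sum>t\<in>T. \<bar>Y t \<omega>\<bar> powr r)"
      using assms by (intro powr_sum_le_sum_powr) auto
    finally show ?thesis .
  qed
  have int_sum: "integrable M (\<lambda>\<omega>. \<Sum>t\<in>T. \<bar>Y t \<omega>\<bar> powr r)"
    using int by (rule Bochner_Integration.integrable_sum)
  have int_abs_sum: "integrable M (\<lambda>\<omega>. \<bar>\<Sum>t\<in>T. Y t \<omega>\<bar> powr r)"
    by (rule Bochner_Integration.integrable_bound[OF int_sum])
      (use pointwise in \<open>auto intro: order_trans[OF _ abs_ge_self]\<close>)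
  have "prob {\<omega> \<in> space M. b < \<bar>\<Sum>t\<in>T. Y t \<omega>\<bar>} \<le> prob {\<omega> \<in> space M. b powr r \<le> \<bar>\<Sum>t\<in>T. Y t \<omega>\<bar> powr r}"
    using assms by (intro finite_measure_mono) (auto intro: powr_mono2 less_imp_le)
  also have "\<dots> \<le> (\<integral>\<omega>. \<bar>\<Sum>t\<in>T. Y t \<omega>\<bar> powr r \<partial>M) / b powr r"
    using \<open>0 < b\<close> by (intro integral_Markov_inequality_measure[OF int_abs_sum]) auto
  also have "\<dots> \<le> (\<integral>\<omega>. (\<Sum>t\<in>T. \<bar>Y t \<omega>\<bar> powr r) \<partial>M) / b powr r"
    by (intro divide_right_mono integral_mono[OF int_abs_sum int_sum] pointwise) simp
  also have "\<dots> = (\<Sum>t\<in>T. \<integral>\<omega>. \<bar>Y t \<omega>\<bar> powr r \<partial>M) / b powr r"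
    using int by (subst Bochner_Integration.integral_sum) auto
  also have "\<dots> \<le> real (card T) * C / b powr r"
    using C sum_mono[of T "\<lambda>t. \<integral>\<omega>. \<bar>Y t \<omega>\<bar> powr r \<partial>M" "\<lambda>_. C"] by (simp add: divide_right_mono)
  finally show ?thesis .
qed

lemma prob_abs_sum_gt_le_orthogonal:
  fixes Y :: "'i \<Rightarrow> 'a \<Rightarrow> real"
  assumes "finite T" and "0 < b"
    and [measurable]: "\<And>t. t \<in> T \<Longrightarrow> Y t \<in> borel_measurable M"
    and int: "\<And>t. t \<in> T \<Longrightarrow> integrable M (\<lambda>\<omega>. (Y t \<omega>)\<^sup>2)"
    and orth: "\<And>t s. t \<in> T \<Longrightarrow> s \<in> T \<Longrightarrow> t \<noteq> s \<Longrightarrow> (\<integral>\<omega>. Y t \<omega> * Y s \<omega> \<partial>M) = 0"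
    and C: "\<And>t. t \<in> T \<Longrightarrow> (\<integral>\<omega>. (Y t \<omega>)\<^sup>2 \<partial>M) \<le> C"
  shows "prob {\<omega> \<in> space M. b < \<bar>\<Sum>t\<in>T. Y t \<omega>\<bar>} \<le> real (card T) * C / b\<^sup>2"
proof -
  have int_mult: "integrable M (\<lambda>\<omega>. Y t \<omega> * Y s \<omega>)" if "t \<in> T" "s \<in> T" for t s
    using that int by (intro integrable_mult_of_square_integrable) auto
  have square: "(\<Sum>t\<in>T. Y t \<omega>)\<^sup>2 = (\<Sum>t\<in>T. \<Sum>s\<in>T. Y t \<omega> * Y s \<omega>)" for \<omega>
    by (simp add: power2_eq_square sum_product)
  have int_square: "integrable M (\<lambda>\<omega>. (\<Sum>t\<in>T. Y t \<omega>)\<^sup>2)"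
    unfolding square using int_mult by auto
  have "(\<integral>\<omega>. (\<Sum>t\<in>T. Y t \<omega>)\<^sup>2 \<partial>M) = (\<Sum>t\<in>T. \<Sum>s\<in>T. \<integral>\<omega>. Y t \<omega> * Y s \<omega> \<partial>M)"
    unfolding square using int_mult by (simp add: Bochner_Integration.integral_sum)
  also have "\<dots> = (\<Sum>t\<in>T. \<integral>\<omega>. (Y t \<omega>)\<^sup>2 \<partial>M)"
  proof (intro sum.cong refl)
    fix t assume t: "t \<in> T"
    then have "(\<Sum>s\<in>T. \<integral>\<omega>. Y t \<omega> * Y s \<omega> \<partial>M)
        = (\<integral>\<omega>. Y t \<omega> * Y t \<omega> \<partial>M) + (\<Sum>s\<in>T - {t}. \<integral>\<omega>. Y t \<omega> * Y s \<omega> \<partial>M)"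
      using \<open>finite T\<close> by (simp add: sum.remove)
    also have "(\<Sum>s\<in>T - {t}. \<integral>\<omega>. Y t \<omega> * Y s \<omega> \<partial>M) = 0"
      using orth t by (intro sum.neutral) auto
    finally show "(\<Sum>s\<in>T. \<integral>\<omega>. Y t \<omega> * Y s \<omega> \<partial>M) = (\<integral>\<omega>. (Y t \<omega>)\<^sup>2 \<partial>M)"
      by (simp add: power2_eq_square)
  qed
  also have "\<dots> \<le> real (card T) * C"
    using C sum_mono[of T "\<lambda>t. \<integral>\<omega>. (Y t \<omega>)\<^sup>2 \<partial>M" "\<lambda>_. C"] by simp
  finally have second_moment: "(\<integral>\<omega>. (\<Sum>t\<in>T. Y t \<omega>)\<^sup>2 \<partial>M) \<le> real (card T) * C" .
  have "prob {\<omega> \<in> space M. b < \<bar>\<Sum>t\<in>T. Y t \<omega>\<bar>} \<le> prob {\<omega> \<in> space M. b\<^sup>2 \<le> (\<Sum>t\<in>T. Y t \<omega>)\<^sup>2}"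
  proof (intro finite_measure_mono subsetI)
    fix \<omega> assume \<omega>: "\<omega> \<in> {\<omega> \<in> space M. b < \<bar>\<Sum>t\<in>T. Y t \<omega>\<bar>}"
    then have "b\<^sup>2 \<le> \<bar>\<Sum>t\<in>T. Y t \<omega>\<bar>\<^sup>2"
      using \<open>0 < b\<close> by (intro power_mono) auto
    then show "\<omega> \<in> {\<omega> \<in> space M. b\<^sup>2 \<le> (\<Sum>t\<in>T. Y t \<omega>)\<^sup>2}" using \<omega> by simp
  qed simp
  also have "\<dots> \<le> (\<integral>\<omega>. (\<Sum>t\<in>T. Y t \<omega>)\<^sup>2 \<partial>M) / b\<^sup>2"
    using \<open>0 < b\<close> by (intro integral_Markov_inequality_measure[OF int_square]) auto
  also have "\<dots> \<le> real (card T) * C / b\<^sup>2"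
    using second_moment by (intro divide_right_mono) auto
  finally show ?thesis .
qed

end

definition truncate :: "real \<Rightarrow> real \<Rightarrow> real" where
  "truncate b y = (if \<bar>y\<bar> \<le> b then y else 0)"

lemma truncate_measurable [measurable]: "truncate b \<in> borel_measurable borel"
  unfolding truncate_def by measurable

lemma abs_truncate_le: "\<bar>truncate b y\<bar> \<le> \<bar>y\<bar>"
  by (simp add: truncate_def)

lemma truncate_square_le:
  assumes "0 < b" "r \<le> 2"
  shows "(truncate b y)\<^sup>2 \<le> b powr (2 - r) * \<bar>y\<bar> powr r"
proof (cases "\<bar>y\<bar> \<le> b \<and> y \<noteq> 0")
  case True
  then have "(truncate b y)\<^sup>2 = \<bar>y\<bar> powr r * \<bar>y\<bar> powr (2 - r)"
    by (simp add: truncate_def powr_add[symmetric] abs_powr_two)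
  also have "\<dots> \<le> \<bar>y\<bar> powr r * b powr (2 - r)"
    using True assms by (intro mult_left_mono powr_mono2) auto
  finally show ?thesis by (simp add: mult.commute)
next
  case False
  then show ?thesis by (auto simp: truncate_def)
qed

lemma abs_sub_truncate_le:
  assumes "0 < b" "1 \<le> r"
  shows "\<bar>y - truncate b y\<bar> \<le> b powr (1 - r) * \<bar>y\<bar> powr r"
proof (cases "\<bar>y\<bar> \<le> b")
  case False
  then have "\<bar>y - truncate b y\<bar> = \<bar>y\<bar> powr r * \<bar>y\<bar> powr (1 - r)"
    using assms by (simp add: truncate_def powr_add[symmetric])
  also have "\<dots> \<le> \<bar>y\<bar> powr r * b powr (1 - r)"
    using False assms by (intro mult_left_mono powr_mono2') auto
  finally show ?thesis by (simp add: mult.commute)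
next
  case True
  then show ?thesis by (simp add: truncate_def)
qed

context prob_space
begin

lemma centered_truncation_moments:
  assumes "0 < b" "r \<le> 2" and [measurable]: "Y \<in> borel_measurable M"
    and int: "integrable M Y" and int_powr: "integrable M (\<lambda>\<omega>. \<bar>Y \<omega>\<bar> powr r)"
  defines "U \<equiv> \<lambda>\<omega>. truncate b (Y \<omega>) - (\<integral>\<omega>. truncate b (Y \<omega>) \<partial>M)"
  shows "integrable M U" and "(\<integral>\<omega>. U \<omega> \<partial>M) = 0" and "integrable M (\<lambda>\<omega>. (U \<omega>)\<^sup>2)"
    and "(\<integral>\<omega>. (U \<omega>)\<^sup>2 \<partial>M) \<le> b powr (2 - r) * (\<integral>\<omega>. \<bar>Y \<omega>\<bar> powr r \<partial>M)"
proof -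
  define m where "m = (\<integral>\<omega>. truncate b (Y \<omega>) \<partial>M)"
  have U_eq: "U = (\<lambda>\<omega>. truncate b (Y \<omega>) - m)" unfolding U_def m_def ..
  have int_trunc: "integrable M (\<lambda>\<omega>. truncate b (Y \<omega>))"
    by (rule Bochner_Integration.integrable_bound[OF int]) (auto intro: abs_truncate_le)
  have int_trunc_sq: "integrable M (\<lambda>\<omega>. (truncate b (Y \<omega>))\<^sup>2)"
    by (rule Bochner_Integration.integrable_bound[where f="\<lambda>\<omega>. b powr (2 - r) * \<bar>Y \<omega>\<bar> powr r"])
      (use int_powr truncate_square_le[OF assms(1,2)] in auto)
  show "integrable M U" unfolding U_eq using int_trunc by simp
  show "(\<integral>\<omega>. U \<omega> \<partial>M) = 0" unfolding U_eq using int_trunc by (simp add: m_def prob_space)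
  have U_sq: "(\<lambda>\<omega>. (U \<omega>)\<^sup>2) = (\<lambda>\<omega>. (truncate b (Y \<omega>))\<^sup>2 - 2 * m * truncate b (Y \<omega>) + m\<^sup>2)"
    unfolding U_eq by (auto simp: power2_eq_square algebra_simps)
  show "integrable M (\<lambda>\<omega>. (U \<omega>)\<^sup>2)" unfolding U_sq using int_trunc_sq int_trunc by simp
  have "(\<integral>\<omega>. (U \<omega>)\<^sup>2 \<partial>M) = (\<integral>\<omega>. (truncate b (Y \<omega>))\<^sup>2 \<partial>M) - m\<^sup>2"
    unfolding U_sq using int_trunc_sq int_trunc by (simp add: m_def prob_space power2_eq_square)
  also have "\<dots> \<le> (\<integral>\<omega>. (truncate b (Y \<omega>))\<^sup>2 \<partial>M)" by simp
  also have "\<dots> \<le> (\<integral>\<omega>. b powr (2 - r) * \<bar>Y \<omega>\<bar> powr r \<partial>M)"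
    using int_trunc_sq int_powr truncate_square_le[OF assms(1,2)] by (intro integral_mono) auto
  finally show "(\<integral>\<omega>. (U \<omega>)\<^sup>2 \<partial>M) \<le> b powr (2 - r) * (\<integral>\<omega>. \<bar>Y \<omega>\<bar> powr r \<partial>M)"
    by simp
qed

lemma truncation_remainder_moment:
  assumes "0 < b" "1 \<le> r" and [measurable]: "Y \<in> borel_measurable M"
    and int: "integrable M Y" and mean: "(\<integral>\<omega>. Y \<omega> \<partial>M) = 0"
    and int_powr: "integrable M (\<lambda>\<omega>. \<bar>Y \<omega>\<bar> powr r)"
  defines "U \<equiv> \<lambda>\<omega>. truncate b (Y \<omega>) - (\<integral>\<omega>. truncate b (Y \<omega>) \<partial>M)"
  shows "integrable M (\<lambda>\<omega>. \<bar>Y \<omega> - U \<omega>\<bar>)"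
    and "(\<integral>\<omega>. \<bar>Y \<omega> - U \<omega>\<bar> \<partial>M) \<le> 2 * b powr (1 - r) * (\<integral>\<omega>. \<bar>Y \<omega>\<bar> powr r \<partial>M)"
proof -
  define m where "m = (\<integral>\<omega>. truncate b (Y \<omega>) \<partial>M)"
  have int_trunc: "integrable M (\<lambda>\<omega>. truncate b (Y \<omega>))"
    by (rule Bochner_Integration.integrable_bound[OF int]) (auto intro: abs_truncate_le)
  have int_rest: "integrable M (\<lambda>\<omega>. Y \<omega> - truncate b (Y \<omega>))"
    using int int_trunc by simp
  have rest: "\<bar>Y \<omega> - U \<omega>\<bar> \<le> \<bar>Y \<omega> - truncate b (Y \<omega>)\<bar> + \<bar>m\<bar>" for \<omega>
    unfolding U_def m_def by simp
  have "integrable M (\<lambda>\<omega>. \<bar>(Y \<omega> - truncate b (Y \<omega>)) + m\<bar>)" using int_rest by simp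
  then show int_abs_rest: "integrable M (\<lambda>\<omega>. \<bar>Y \<omega> - U \<omega>\<bar>)"
    unfolding U_def m_def by (simp add: algebra_simps)
  \<comment> \<open>since E Y = 0, the centring constant m is minus the mean of the remainder\<close>
  have "m = - (\<integral>\<omega>. Y \<omega> - truncate b (Y \<omega>) \<partial>M)"
    using int int_trunc mean by (simp add: m_def)
  then have m_bound: "\<bar>m\<bar> \<le> (\<integral>\<omega>. \<bar>Y \<omega> - truncate b (Y \<omega>)\<bar> \<partial>M)" by simp
  have "(\<integral>\<omega>. \<bar>Y \<omega> - U \<omega>\<bar> \<partial>M) \<le> (\<integral>\<omega>. \<bar>Y \<omega> - truncate b (Y \<omega>)\<bar> + \<bar>m\<bar> \<partial>M)"
    using int_abs_rest int_rest rest by (intro integral_mono) auto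
  also have "\<dots> = (\<integral>\<omega>. \<bar>Y \<omega> - truncate b (Y \<omega>)\<bar> \<partial>M) + \<bar>m\<bar>"
    using int_rest by (simp add: prob_space)
  also have "\<bar>m\<bar> \<le> (\<integral>\<omega>. \<bar>Y \<omega> - truncate b (Y \<omega>)\<bar> \<partial>M)" by (rule m_bound)
  also have "(\<integral>\<omega>. \<bar>Y \<omega> - truncate b (Y \<omega>)\<bar> \<partial>M) \<le> (\<integral>\<omega>. b powr (1 - r) * \<bar>Y \<omega>\<bar> powr r \<partial>M)"
    using int_rest int_powr abs_sub_truncate_le[OF assms(1,2)] by (intro integral_mono) auto
  finally show "(\<integral>\<omega>. \<bar>Y \<omega> - U \<omega>\<bar> \<partial>M) \<le> 2 * b powr (1 - r) * (\<integral>\<omega>. \<bar>Y \<omega>\<bar> powr r \<partial>M)"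
    by simp
qed

lemma prob_abs_add_gt_le:
  fixes U V :: "'a \<Rightarrow> real"
  assumes [measurable]: "U \<in> borel_measurable M" "V \<in> borel_measurable M"
  shows "prob {\<omega> \<in> space M. b < \<bar>U \<omega> + V \<omega>\<bar>}
           \<le> prob {\<omega> \<in> space M. b / 2 < \<bar>U \<omega>\<bar>} + prob {\<omega> \<in> space M. b / 2 < \<bar>V \<omega>\<bar>}"
proof -
  have "prob {\<omega> \<in> space M. b < \<bar>U \<omega> + V \<omega>\<bar>}
      \<le> prob ({\<omega> \<in> space M. b / 2 < \<bar>U \<omega>\<bar>} \<union> {\<omega> \<in> space M. b / 2 < \<bar>V \<omega>\<bar>})"
  proof (intro finite_measure_mono subsetI)
    fix \<omega> assume "\<omega> \<in> {\<omega> \<in> space M. b < \<bar>U \<omega> + V \<omega>\<bar>}"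
    moreover have "\<bar>U \<omega> + V \<omega>\<bar> \<le> \<bar>U \<omega>\<bar> + \<bar>V \<omega>\<bar>" by (rule abs_triangle_ineq)
    ultimately show "\<omega> \<in> {\<omega> \<in> space M. b / 2 < \<bar>U \<omega>\<bar>} \<union> {\<omega> \<in> space M. b / 2 < \<bar>V \<omega>\<bar>}"
      by auto
  qed auto
  also have "\<dots> \<le> prob {\<omega> \<in> space M. b / 2 < \<bar>U \<omega>\<bar>} + prob {\<omega> \<in> space M. b / 2 < \<bar>V \<omega>\<bar>}"
    by (intro measure_Un_le) auto
  finally show ?thesis .
qed

lemma prob_abs_sum_gt_le_indep:
  fixes Y :: "'i \<Rightarrow> 'a \<Rightarrow> real"
  assumes "finite T" "1 \<le> r" "r \<le> 2" "0 < b"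
    and [measurable]: "\<And>t. t \<in> T \<Longrightarrow> Y t \<in> borel_measurable M"
    and int_powr: "\<And>t. t \<in> T \<Longrightarrow> integrable M (\<lambda>\<omega>. \<bar>Y t \<omega>\<bar> powr r)"
    and C: "\<And>t. t \<in> T \<Longrightarrow> (\<integral>\<omega>. \<bar>Y t \<omega>\<bar> powr r \<partial>M) \<le> C"
    and int: "\<And>t. t \<in> T \<Longrightarrow> integrable M (Y t)"
    and mean: "\<And>t. t \<in> T \<Longrightarrow> (\<integral>\<omega>. Y t \<omega> \<partial>M) = 0"
    and indep: "\<And>t s. t \<in> T \<Longrightarrow> s \<in> T \<Longrightarrow> t \<noteq> s \<Longrightarrow> indep_var borel (Y t) borel (Y s)"
  shows "prob {\<omega> \<in> space M. b < \<bar>\<Sum>t\<in>T. Y t \<omega>\<bar>} \<le> 8 * real (card T) * C / b powr r"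
proof -
  \<comment> \<open>the truncated and centred U t are orthogonal, and the remainders Y t - U t are small in L1\<close>
  define U where "U t = (\<lambda>\<omega>. truncate b (Y t \<omega>) - (\<integral>\<omega>. truncate b (Y t \<omega>) \<partial>M))" for t
  have moments: "integrable M (U t)" "(\<integral>\<omega>. U t \<omega> \<partial>M) = 0"
      "integrable M (\<lambda>\<omega>. (U t \<omega>)\<^sup>2)" "(\<integral>\<omega>. (U t \<omega>)\<^sup>2 \<partial>M) \<le> b powr (2 - r) * C"
      "integrable M (\<lambda>\<omega>. \<bar>Y t \<omega> - U t \<omega>\<bar>)"
      "(\<integral>\<omega>. \<bar>Y t \<omega> - U t \<omega>\<bar> \<partial>M) \<le> 2 * b powr (1 - r) * C"
    if t: "t \<in> T" for t
    using centered_truncation_moments[OF \<open>0 < b\<close> \<open>r \<le> 2\<close> _ int[OF t] int_powr[OF t]]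
      truncation_remainder_moment[OF \<open>0 < b\<close> \<open>1 \<le> r\<close> _ int[OF t] mean[OF t] int_powr[OF t]]
      C[OF t] mult_left_mono[OF C[OF t], of "b powr (2 - r)"] mult_left_mono[OF C[OF t], of "2 * b powr (1 - r)"]
    unfolding U_def using t by auto
  have [measurable]: "U t \<in> borel_measurable M" if "t \<in> T" for t
    unfolding U_def using that by measurable
  have orth: "(\<integral>\<omega>. U t \<omega> * U s \<omega> \<partial>M) = 0" if ts: "t \<in> T" "s \<in> T" "t \<noteq> s" for t s
  proof -
    have "indep_var borel ((\<lambda>y. truncate b y - (\<integral>\<omega>. truncate b (Y t \<omega>) \<partial>M)) \<circ> Y t)
        borel ((\<lambda>y. truncate b y - (\<integral>\<omega>. truncate b (Y s \<omega>) \<partial>M)) \<circ> Y s)"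
      by (rule indep_var_compose[OF indep[OF ts]]) auto
    then have "indep_var borel (U t) borel (U s)" by (simp add: U_def comp_def)
    then show ?thesis
      using indep_var_lebesgue_integral[of "U t" "U s"] moments(1,2) ts by simp
  qed
  have PU: "prob {\<omega> \<in> space M. b / 2 < \<bar>\<Sum>t\<in>T. U t \<omega>\<bar>} \<le> real (card T) * (b powr (2 - r) * C) / (b / 2)\<^sup>2"
    using \<open>finite T\<close> \<open>0 < b\<close> moments(3,4) orth by (intro prob_abs_sum_gt_le_orthogonal) auto
  have PV: "prob {\<omega> \<in> space M. b / 2 < \<bar>\<Sum>t\<in>T. Y t \<omega> - U t \<omega>\<bar>}
      \<le> real (card T) * (2 * b powr (1 - r) * C) / (b / 2) powr 1"
    using \<open>finite T\<close> \<open>0 < b\<close> moments(5,6) by (intro prob_abs_sum_gt_le_powr) auto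
  have "prob {\<omega> \<in> space M. b < \<bar>\<Sum>t\<in>T. Y t \<omega>\<bar>}
      = prob {\<omega> \<in> space M. b < \<bar>(\<Sum>t\<in>T. U t \<omega>) + (\<Sum>t\<in>T. Y t \<omega> - U t \<omega>)\<bar>}"
    by (simp add: sum_subtractf)
  also have "\<dots> \<le> prob {\<omega> \<in> space M. b / 2 < \<bar>\<Sum>t\<in>T. U t \<omega>\<bar>}
      + prob {\<omega> \<in> space M. b / 2 < \<bar>\<Sum>t\<in>T. Y t \<omega> - U t \<omega>\<bar>}"
    by (intro prob_abs_add_gt_le) measurable
  also have "\<dots> \<le> 8 * real (card T) * C / b powr r"
  proof -
    define B where "B = b powr r"
    have "0 < B" using \<open>0 < b\<close> by (simp add: B_def)
    have "b powr (2 - r) = b\<^sup>2 / B" "b powr (1 - r) = b / B" "(b / 2) powr 1 = b / 2"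
      using \<open>0 < b\<close> by (simp_all add: B_def powr_diff)
    moreover have "real (card T) * (b\<^sup>2 / B * C) / (b / 2)\<^sup>2
        + real (card T) * (2 * (b / B) * C) / (b / 2) = 8 * real (card T) * C / B"
      using \<open>0 < b\<close> \<open>0 < B\<close> by (simp add: field_simps power2_eq_square)
    ultimately show ?thesis using PU PV unfolding B_def by simp
  qed
  finally show ?thesis .
qed

end

section \<open>Spectral norm\<close>

lemma spectral_norm_bounds:
  assumes "1 \<le> p"
  shows spectral_norm_nonneg: "0 \<le> spectral_norm p A"
    and spectral_norm_le_sum_abs: "spectral_norm p A \<le> (\<Sum>i=1..p. \<Sum>j=1..p. \<bar>A i j\<bar>)"
proof -
  define S where "S = {sqrt (\<Sum>i=1..p. (\<Sum>j=1..p. A i j * x j)\<^sup>2) | x. (\<Sum>j=1..p. (x j)\<^sup>2) = 1}"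
  have sn: "spectral_norm p A = Sup S" unfolding spectral_norm_def S_def ..
  define e where "e j = (if j = 1 then 1 else 0 :: real)" for j :: nat
  have "(\<Sum>j=1..p. (e j)\<^sup>2) = (\<Sum>j=1..p. if j = 1 then 1 else 0)"
    by (intro sum.cong) (auto simp: e_def)
  also have "\<dots> = 1" using assms by simp
  finally have "(\<Sum>j=1..p. (e j)\<^sup>2) = 1" .
  then have e_in: "sqrt (\<Sum>i=1..p. (\<Sum>j=1..p. A i j * e j)\<^sup>2) \<in> S" unfolding S_def by blast
  have bound: "s \<le> (\<Sum>i=1..p. \<Sum>j=1..p. \<bar>A i j\<bar>)" if "s \<in> S" for s
  proof -
    obtain x where x: "(\<Sum>j=1..p. (x j)\<^sup>2) = 1" and s: "s = sqrt (\<Sum>i=1..p. (\<Sum>j=1..p. A i j * x j)\<^sup>2)"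
      using \<open>s \<in> S\<close> unfolding S_def by blast
    have "\<bar>x j\<bar> \<le> 1" if "j \<in> {1..p}" for j
    proof -
      have "(x j)\<^sup>2 \<le> 1\<^sup>2" using x that member_le_sum[of j "{1..p}" "\<lambda>j. (x j)\<^sup>2"] by simp
      then show ?thesis using abs_le_square_iff[of "x j" 1] by simp
    qed
    then have row: "\<bar>\<Sum>j=1..p. A i j * x j\<bar> \<le> (\<Sum>j=1..p. \<bar>A i j\<bar>)" for i
      by (intro order_trans[OF sum_abs] sum_mono) (simp add: abs_mult mult_left_le)
    have "s = L2_set (\<lambda>i. \<Sum>j=1..p. A i j * x j) {1..p}" unfolding s L2_set_def ..
    also have "\<dots> \<le> (\<Sum>i=1..p. \<bar>\<Sum>j=1..p. A i j * x j\<bar>)" by (rule L2_set_le_sum_abs)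
    also have "\<dots> \<le> (\<Sum>i=1..p. \<Sum>j=1..p. \<bar>A i j\<bar>)" by (intro sum_mono row)
    finally show ?thesis .
  qed
  show "spectral_norm p A \<le> (\<Sum>i=1..p. \<Sum>j=1..p. \<bar>A i j\<bar>)"
    unfolding sn using e_in bound by (intro cSup_least) auto
  have "0 \<le> sqrt (\<Sum>i=1..p. (\<Sum>j=1..p. A i j * e j)\<^sup>2)" by (simp add: sum_nonneg)
  also have "\<dots> \<le> Sup S" using e_in bound by (intro cSup_upper bdd_aboveI) auto
  finally show "0 \<le> spectral_norm p A" unfolding sn .
qed

lemma tendsto_in_prob_zeroI:
  assumes "\<And>\<epsilon>. 0 < \<epsilon> \<Longrightarrow> \<exists>A. (\<forall>n. A n \<in> sets M \<and> {\<omega> \<in> space M. \<epsilon> < \<bar>Y n \<omega>\<bar>} \<subseteq> A n)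
                                \<and> (\<lambda>n. measure M (A n)) \<longlonglongrightarrow> 0"
  shows "tendsto_in_prob_zero M Y"
  unfolding tendsto_in_prob_zero_def
proof (intro allI impI)
  fix \<epsilon> \<eta> :: real assume "0 < \<epsilon>" "0 < \<eta>"
  then obtain A where A: "\<And>n. A n \<in> sets M \<and> {\<omega> \<in> space M. \<epsilon> < \<bar>Y n \<omega>\<bar>} \<subseteq> A n"
    and lim: "(\<lambda>n. measure M (A n)) \<longlonglongrightarrow> 0"
    using assms by blast
  show "eventually (\<lambda>n. \<exists>B \<in> sets M. {\<omega> \<in> space M. \<bar>Y n \<omega>\<bar> > \<epsilon>} \<subseteq> B \<and> measure M B < \<eta>) sequentially"
    using order_tendstoD(2)[OF lim \<open>0 < \<eta>\<close>] by eventually_elim (use A in blast)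
qed

lemma (in prob_space) tendsto_in_prob_zero_offdiag_spectral_norm:
  fixes S :: "nat \<Rightarrow> nat \<Rightarrow> nat \<Rightarrow> 'a \<Rightarrow> real" and a :: "nat \<Rightarrow> real"
  assumes "1 \<le> p"
    and meas: "\<And>n i j. i \<in> {1..p} \<Longrightarrow> j \<in> {1..p} \<Longrightarrow> i \<noteq> j \<Longrightarrow> S n i j \<in> borel_measurable M"
    and entries: "\<And>i j \<epsilon>. i \<in> {1..p} \<Longrightarrow> j \<in> {1..p} \<Longrightarrow> i \<noteq> j \<Longrightarrow> 0 < \<epsilon> \<Longrightarrow>
        (\<lambda>n. prob {\<omega> \<in> space M. \<epsilon> * (a n)\<^sup>2 < \<bar>S n i j \<omega>\<bar>}) \<longlonglongrightarrow> 0"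
  shows "tendsto_in_prob_zero M
           (\<lambda>n \<omega>. spectral_norm p (\<lambda>i j. if i = j then 0 else S n i j \<omega>) / (a n)\<^sup>2)"
proof (rule tendsto_in_prob_zeroI)
  fix \<epsilon> :: real assume "0 < \<epsilon>"
  define Off where "Off = {(i, j) \<in> {1..p} \<times> {1..p}. i \<noteq> j}"
  have "finite Off" unfolding Off_def by (rule finite_subset[of _ "{1..p} \<times> {1..p}"]) auto
  define \<epsilon>' where "\<epsilon>' = \<epsilon> / (real p)\<^sup>2"
  have "0 < \<epsilon>'" using \<open>0 < \<epsilon>\<close> \<open>1 \<le> p\<close> by (simp add: \<epsilon>'_def)
  define B where "B n ij = {\<omega> \<in> space M. \<epsilon>' * (a n)\<^sup>2 < \<bar>S n (fst ij) (snd ij) \<omega>\<bar>}" for n ij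
  have B_sets: "B n ij \<in> sets M" if "ij \<in> Off" for n ij
    using meas[of "fst ij" "snd ij" n] that unfolding B_def Off_def by auto
  \<comment> \<open>outside these events every off-diagonal entry is at most \<epsilon>' (a n)^2, and the sum of
    the p^2 entries bounds the norm\<close>
  have "{\<omega> \<in> space M. \<epsilon> < \<bar>spectral_norm p (\<lambda>i j. if i = j then 0 else S n i j \<omega>) / (a n)\<^sup>2\<bar>}
      \<subseteq> (\<Union>ij\<in>Off. B n ij)" for n
  proof (intro subsetI, rule ccontr)
    fix \<omega> assume \<omega>: "\<omega> \<in> {\<omega> \<in> space M. \<epsilon> < \<bar>spectral_norm p (\<lambda>i j. if i = j then 0 else S n i j \<omega>) / (a n)\<^sup>2\<bar>}"
      and "\<omega> \<notin> (\<Union>ij\<in>Off. B n ij)"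
    define E where "E = (\<lambda>i j. if i = j then 0 else S n i j \<omega>)"
    have "\<bar>E i j\<bar> \<le> \<epsilon>' * (a n)\<^sup>2" if "i \<in> {1..p}" "j \<in> {1..p}" for i j
      using \<omega> \<open>\<omega> \<notin> (\<Union>ij\<in>Off. B n ij)\<close> \<open>0 < \<epsilon>'\<close> that
      by (cases "i = j") (fastforce simp: E_def B_def Off_def not_less)+
    then have "spectral_norm p E \<le> (\<Sum>i=1..p. \<Sum>j=1..p. \<epsilon>' * (a n)\<^sup>2)"
      by (intro order_trans[OF spectral_norm_le_sum_abs[OF \<open>1 \<le> p\<close>]] sum_mono) auto
    also have "\<dots> = \<epsilon> * (a n)\<^sup>2" using \<open>1 \<le> p\<close> by (simp add: \<epsilon>'_def power2_eq_square)
    finally have "\<bar>spectral_norm p E / (a n)\<^sup>2\<bar> \<le> \<epsilon>"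
      using spectral_norm_nonneg[OF \<open>1 \<le> p\<close>, of E] \<open>0 < \<epsilon>\<close>
      by (cases "a n = 0") (auto simp: field_simps)
    then show False using \<omega> unfolding E_def by simp
  qed
  moreover have "(\<lambda>n. prob (\<Union>ij\<in>Off. B n ij)) \<longlonglongrightarrow> 0"
  proof (rule tendsto_sandwich[OF _ _ tendsto_const])
    show "eventually (\<lambda>n. prob (\<Union>ij\<in>Off. B n ij) \<le> (\<Sum>ij\<in>Off. prob (B n ij))) sequentially"
      using \<open>finite Off\<close> B_sets by (intro always_eventually allI measure_UNION_le) auto
    show "(\<lambda>n. \<Sum>ij\<in>Off. prob (B n ij)) \<longlonglongrightarrow> 0"
      using entries \<open>0 < \<epsilon>'\<close> unfolding B_def Off_def by (intro tendsto_null_sum) auto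
  qed simp
  ultimately show "\<exists>A. (\<forall>n. A n \<in> sets M \<and> {\<omega> \<in> space M. \<epsilon> < \<bar>spectral_norm p
                    (\<lambda>i j. if i = j then 0 else S n i j \<omega>) / (a n)\<^sup>2\<bar>} \<subseteq> A n)
                  \<and> (\<lambda>n. prob (A n)) \<longlonglongrightarrow> 0"
    using \<open>finite Off\<close> B_sets by (intro exI[of _ "\<lambda>n. \<Union>ij\<in>Off. B n ij"]) auto
qed

section \<open>Independence and iid fields\<close>

context prob_space
begin

lemma indep_vars_indep_var:
  fixes Y :: "'i \<Rightarrow> 'a \<Rightarrow> real"
  assumes indep: "indep_vars (\<lambda>_. borel) Y I" and "a \<in> I" "b \<in> I" "a \<noteq> b"
  shows "indep_var borel (Y a) borel (Y b)"
proof -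
  have "indep_var (PiM {a} (\<lambda>_. borel)) (\<lambda>\<omega>. restrict (\<lambda>i. Y i \<omega>) {a})
                  (PiM {b} (\<lambda>_. borel)) (\<lambda>\<omega>. restrict (\<lambda>i. Y i \<omega>) {b})"
    using assms by (intro indep_var_restrict[OF indep]) auto
  then have "indep_var borel ((\<lambda>f. f a) \<circ> (\<lambda>\<omega>. restrict (\<lambda>i. Y i \<omega>) {a}))
                       borel ((\<lambda>f. f b) \<circ> (\<lambda>\<omega>. restrict (\<lambda>i. Y i \<omega>) {b}))"
    by (rule indep_var_compose) auto
  then show ?thesis by (simp add: comp_def)
qed

lemma indep_vars_indep_var_mult:
  fixes Y :: "'i \<Rightarrow> 'a \<Rightarrow> real"
  assumes indep: "indep_vars (\<lambda>_. borel) Y I" and "{a1, a2, b1, b2} \<subseteq> I"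
    and "{a1, a2} \<inter> {b1, b2} = {}"
  shows "indep_var borel (\<lambda>\<omega>. Y a1 \<omega> * Y a2 \<omega>) borel (\<lambda>\<omega>. Y b1 \<omega> * Y b2 \<omega>)"
proof -
  have "indep_var (PiM {a1, a2} (\<lambda>_. borel)) (\<lambda>\<omega>. restrict (\<lambda>i. Y i \<omega>) {a1, a2})
                  (PiM {b1, b2} (\<lambda>_. borel)) (\<lambda>\<omega>. restrict (\<lambda>i. Y i \<omega>) {b1, b2})"
    using assms by (intro indep_var_restrict[OF indep]) auto
  then have "indep_var borel ((\<lambda>f. f a1 * f a2) \<circ> (\<lambda>\<omega>. restrict (\<lambda>i. Y i \<omega>) {a1, a2}))
                       borel ((\<lambda>f. f b1 * f b2) \<circ> (\<lambda>\<omega>. restrict (\<lambda>i. Y i \<omega>) {b1, b2}))"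
    by (rule indep_var_compose)
      (auto intro!: borel_measurable_times measurable_component_singleton)
  then show ?thesis by (simp add: comp_def)
qed

lemma integral_eq_of_distr_eq:
  fixes U V :: "'a \<Rightarrow> real" and g :: "real \<Rightarrow> real"
  assumes distr: "distr M borel U = distr M borel V"
    and [measurable]: "U \<in> borel_measurable M" "V \<in> borel_measurable M" "g \<in> borel_measurable borel"
    and int: "integrable M (\<lambda>\<omega>. g (V \<omega>))"
  shows "integrable M (\<lambda>\<omega>. g (U \<omega>))" and "(\<integral>\<omega>. g (U \<omega>) \<partial>M) = (\<integral>\<omega>. g (V \<omega>) \<partial>M)"
proof -
  have "integrable (distr M borel U) g"
    unfolding distr using int by (subst integrable_distr_eq) auto
  then show "integrable M (\<lambda>\<omega>. g (U \<omega>))" by (subst (asm) integrable_distr_eq) auto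
  have "(\<integral>\<omega>. g (U \<omega>) \<partial>M) = (\<integral>x. g x \<partial>distr M borel U)" by (simp add: integral_distr)
  also have "\<dots> = (\<integral>\<omega>. g (V \<omega>) \<partial>M)" unfolding distr by (simp add: integral_distr)
  finally show "(\<integral>\<omega>. g (U \<omega>) \<partial>M) = (\<integral>\<omega>. g (V \<omega>) \<partial>M)" .
qed

end

lemma pos_idx_iff [simp]: "(i, t) \<in> pos_idx \<longleftrightarrow> 1 \<le> i \<and> 1 \<le> t"
  by (simp add: pos_idx_def)

context
  fixes M :: "'a measure" and Y :: "nat \<Rightarrow> nat \<Rightarrow> 'a \<Rightarrow> real"
  assumes iid: "iid_field M Y" and prob: "prob_space M"
begin

interpretation prob_space M by (rule prob)

lemma iid_field_measurable [measurable]: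
  assumes "1 \<le> i" "1 \<le> t"
  shows "Y i t \<in> borel_measurable M"
proof -
  have "(i, t) \<in> pos_idx" using assms by simp
  with iid show ?thesis unfolding iid_field_def indep_vars_def by (metis (mono_tags) case_prod_conv)
qed

lemma iid_field_integral_eq:
  fixes g :: "real \<Rightarrow> real"
  assumes "1 \<le> i" "1 \<le> t" and [measurable]: "g \<in> borel_measurable borel"
    and "integrable M (\<lambda>\<omega>. g (Y 1 1 \<omega>))"
  shows "integrable M (\<lambda>\<omega>. g (Y i t \<omega>))" and "(\<integral>\<omega>. g (Y i t \<omega>) \<partial>M) = (\<integral>\<omega>. g (Y 1 1 \<omega>) \<partial>M)"
proof -
  have "distr M borel (Y i t) = distr M borel (Y 1 1)"
    using iid assms unfolding iid_field_def by auto
  then show "integrable M (\<lambda>\<omega>. g (Y i t \<omega>))" "(\<integral>\<omega>. g (Y i t \<omega>) \<partial>M) = (\<integral>\<omega>. g (Y 1 1 \<omega>) \<partial>M)"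
    using assms integral_eq_of_distr_eq[of "Y i t" "Y 1 1" g] by auto
qed

lemma iid_field_indep_var:
  assumes "1 \<le> i" "1 \<le> j" "1 \<le> t" "1 \<le> s" "(i, t) \<noteq> (j, s)"
  shows "indep_var borel (Y i t) borel (Y j s)"
proof -
  have "indep_vars (\<lambda>_. borel) (\<lambda>(i, t). Y i t) pos_idx" using iid unfolding iid_field_def ..
  from indep_vars_indep_var[OF this, of "(i, t)" "(j, s)"] show ?thesis using assms by simp
qed

lemma iid_field_indep_var_mult:
  assumes "1 \<le> i" "1 \<le> j" "1 \<le> t" "1 \<le> s" "i \<noteq> j" "t \<noteq> s"
  shows "indep_var borel (\<lambda>\<omega>. Y i t \<omega> * Y j t \<omega>) borel (\<lambda>\<omega>. Y i s \<omega> * Y j s \<omega>)"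
proof -
  have "indep_vars (\<lambda>_. borel) (\<lambda>(i, t). Y i t) pos_idx" using iid unfolding iid_field_def ..
  from indep_vars_indep_var_mult[OF this, of "(i, t)" "(j, t)" "(i, s)" "(j, s)"]
  show ?thesis using assms by simp
qed

lemma iid_field_product_moment:
  fixes g :: "real \<Rightarrow> real"
  assumes "1 \<le> i" "1 \<le> j" "1 \<le> t" "i \<noteq> j"
    and [measurable]: "g \<in> borel_measurable borel" and int: "integrable M (\<lambda>\<omega>. g (Y 1 1 \<omega>))"
  shows "integrable M (\<lambda>\<omega>. g (Y i t \<omega>) * g (Y j t \<omega>))"
    and "(\<integral>\<omega>. g (Y i t \<omega>) * g (Y j t \<omega>) \<partial>M) = (\<integral>\<omega>. g (Y 1 1 \<omega>) \<partial>M)\<^sup>2"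
proof -
  have "indep_var borel (Y i t) borel (Y j t)"
    using assms by (intro iid_field_indep_var) auto
  then have "indep_var borel (g \<circ> Y i t) borel (g \<circ> Y j t)"
    by (rule indep_var_compose) simp_all
  then have indep: "indep_var borel (\<lambda>\<omega>. g (Y i t \<omega>)) borel (\<lambda>\<omega>. g (Y j t \<omega>))"
    by (simp add: comp_def)
  have i: "integrable M (\<lambda>\<omega>. g (Y i t \<omega>))" "(\<integral>\<omega>. g (Y i t \<omega>) \<partial>M) = (\<integral>\<omega>. g (Y 1 1 \<omega>) \<partial>M)"
    and j: "integrable M (\<lambda>\<omega>. g (Y j t \<omega>))" "(\<integral>\<omega>. g (Y j t \<omega>) \<partial>M) = (\<integral>\<omega>. g (Y 1 1 \<omega>) \<partial>M)"
    using iid_field_integral_eq[of i t g, OF assms(1,3,5) int]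
      iid_field_integral_eq[of j t g, OF assms(2,3,5) int] by simp_all
  show "integrable M (\<lambda>\<omega>. g (Y i t \<omega>) * g (Y j t \<omega>))"
    by (rule indep_var_integrable[OF indep i(1) j(1)])
  show "(\<integral>\<omega>. g (Y i t \<omega>) * g (Y j t \<omega>) \<partial>M) = (\<integral>\<omega>. g (Y 1 1 \<omega>) \<partial>M)\<^sup>2"
    unfolding indep_var_lebesgue_integral[OF indep i(1) j(1)] i(2) j(2) by (simp add: power2_eq_square)
qed

lemma iid_field_cross_sum_bound_powr:
  assumes ij: "1 \<le> i" "1 \<le> j" "i \<noteq> j" and "0 < r" "r \<le> 1" "0 < b"
    and "integrable M (\<lambda>\<omega>. \<bar>Y 1 1 \<omega>\<bar> powr r)"
  shows "prob {\<omega> \<in> space M. b < \<bar>\<Sum>t=1..n. Y i t \<omega> * Y j t \<omega>\<bar>}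
           \<le> (\<integral>\<omega>. \<bar>Y 1 1 \<omega>\<bar> powr r \<partial>M)\<^sup>2 * real n / b powr r"
proof -
  have "prob {\<omega> \<in> space M. b < \<bar>\<Sum>t\<in>{1..n}. Y i t \<omega> * Y j t \<omega>\<bar>}
      \<le> real (card {1..n}) * (\<integral>\<omega>. \<bar>Y 1 1 \<omega>\<bar> powr r \<partial>M)\<^sup>2 / b powr r"
    using assms iid_field_product_moment[OF ij(1,2) _ ij(3), of _ "\<lambda>x. \<bar>x\<bar> powr r"]
    by (intro prob_abs_sum_gt_le_powr) (auto simp: abs_mult powr_mult)
  then show ?thesis by (simp add: mult.commute)
qed

lemma iid_field_cross_sum_bound_indep:
  assumes ij: "1 \<le> i" "1 \<le> j" "i \<noteq> j" and "1 \<le> r" "r \<le> 2" "0 < b"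
    and "integrable M (\<lambda>\<omega>. \<bar>Y 1 1 \<omega>\<bar> powr r)"
    and "integrable M (Y 1 1)" "(\<integral>\<omega>. Y 1 1 \<omega> \<partial>M) = 0"
  shows "prob {\<omega> \<in> space M. b < \<bar>\<Sum>t=1..n. Y i t \<omega> * Y j t \<omega>\<bar>}
           \<le> 8 * (\<integral>\<omega>. \<bar>Y 1 1 \<omega>\<bar> powr r \<partial>M)\<^sup>2 * real n / b powr r"
proof -
  have "prob {\<omega> \<in> space M. b < \<bar>\<Sum>t\<in>{1..n}. Y i t \<omega> * Y j t \<omega>\<bar>}
      \<le> 8 * real (card {1..n}) * (\<integral>\<omega>. \<bar>Y 1 1 \<omega>\<bar> powr r \<partial>M)\<^sup>2 / b powr r"
    using assms iid_field_product_moment[OF ij(1,2) _ ij(3), of _ "\<lambda>x. \<bar>x\<bar> powr r"]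
      iid_field_product_moment[OF ij(1,2) _ ij(3), of _ "\<lambda>x. x"]
    by (intro prob_abs_sum_gt_le_indep iid_field_indep_var_mult) (auto simp: abs_mult powr_mult)
  then show ?thesis by (simp add: ac_simps)
qed

end

section \<open>The iid model\<close>

lemma (in prob_space) iid_model_measurable:
  "iid_model M X \<Longrightarrow> 1 \<le> i \<Longrightarrow> 1 \<le> t \<Longrightarrow> X i t \<in> borel_measurable M"
  unfolding iid_model_def using iid_field_measurable prob_space_axioms by blast

lemma (in prob_space) iid_model_cross_sum_tendsto_zero:
  fixes X :: "nat \<Rightarrow> nat \<Rightarrow> 'a \<Rightarrow> real" and a :: "nat \<Rightarrow> real"
  assumes iid: "iid_model M X" and lim: "(\<lambda>n. real n * abs_tail M (X 1 1) (a n)) \<longlonglongrightarrow> 1"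
    and ij: "1 \<le> i" "1 \<le> j" "i \<noteq> j" and "0 < \<epsilon>"
  shows "(\<lambda>n. prob {\<omega> \<in> space M. \<epsilon> * (a n)\<^sup>2 < \<bar>\<Sum>t=1..n. X i t \<omega> * X j t \<omega>\<bar>}) \<longlonglongrightarrow> 0"
proof -
  obtain \<alpha> where \<alpha>: "0 < \<alpha>" "\<alpha> < 4" and rv: "regularly_varying M (X 1 1) \<alpha>"
    and iid_field: "iid_field M X" and mean: "integrable M (X 1 1) \<Longrightarrow> (\<integral>\<omega>. X 1 1 \<omega> \<partial>M) = 0"
    using iid unfolding iid_model_def by blast
  have "\<forall>\<beta>>\<alpha>. \<exists>c>0. \<exists>x0>0. \<forall>x\<ge>x0. c * x powr -\<beta> \<le> abs_tail M (X 1 1) x"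
    using abs_tail_regularly_varying_lower[OF rv] \<alpha> by simp
  note cross_sum_tendsto_zero =
    prob_abs_gt_norming_sq_tendsto_zero[OF regularly_varying_measurable[OF rv] this lim]
  \<comment> \<open>r < \<alpha> makes the r-th moments finite, and \<alpha> < 2 r makes n / (a n) powr (2 r) vanish\<close>
  show ?thesis
  proof (cases "\<alpha> < 2")
    case True
    define r where "r = min 1 (3 * \<alpha> / 4)"
    have r: "0 < r" "r \<le> 1" "r < \<alpha>" "\<alpha> < 2 * r" using \<alpha> True by (auto simp: r_def)
    show ?thesis
      using iid_field_cross_sum_bound_powr[OF iid_field prob_space_axioms ij r(1,2) _
          integrable_abs_powr_regularly_varying[OF rv r(1,3)]] r \<alpha> \<open>0 < \<epsilon>\<close>
      by (intro cross_sum_tendsto_zero) auto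
  next
    case False
    define r where "r = \<alpha> / 4 + 1"
    have r: "1 \<le> r" "r \<le> 2" "r < \<alpha>" "\<alpha> < 2 * r" using \<alpha> False by (auto simp: r_def)
    have "integrable M (\<lambda>\<omega>. \<bar>X 1 1 \<omega>\<bar> powr 1)"
      using integrable_abs_powr_regularly_varying[OF rv, of 1] r by linarith
    then have "integrable M (X 1 1)"
      using regularly_varying_measurable[OF rv] by (simp add: integrable_abs_iff)
    then show ?thesis
      using iid_field_cross_sum_bound_indep[OF iid_field prob_space_axioms ij r(1,2) _
          integrable_abs_powr_regularly_varying[OF rv _ r(3)]] mean r \<alpha> \<open>0 < \<epsilon>\<close>
      by (intro cross_sum_tendsto_zero) auto
  qed
qed

section \<open>The stochastic volatility model\<close>

definition field_map :: "(nat \<Rightarrow> nat \<Rightarrow> 'a \<Rightarrow> real) \<Rightarrow> 'a \<Rightarrow> (nat \<times> nat \<Rightarrow> real)" where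
  "field_map Y = (\<lambda>\<omega> (i, t). Y (Suc i) (Suc t) \<omega>)"

lemma measurable_component_field [measurable]:
  "(\<lambda>f. f k) \<in> borel_measurable (Pi\<^sub>M UNIV (\<lambda>_::nat \<times> nat. borel :: real measure))"
  by (rule measurable_component_singleton) simp

lemma measurable_field_map:
  assumes "\<And>i t. 1 \<le> i \<Longrightarrow> 1 \<le> t \<Longrightarrow> Y i t \<in> borel_measurable M"
  shows "field_map Y \<in> measurable M (Pi\<^sub>M UNIV (\<lambda>_. borel))"
proof (rule measurable_PiM_single')
  show "(\<lambda>\<omega>. field_map Y \<omega> k) \<in> borel_measurable M" for k
    using assms by (cases k) (simp add: field_map_def)
qed (auto simp: field_map_def)

lemma measurable_field_shift:
  "field_shift a b \<in> measurable (Pi\<^sub>M UNIV (\<lambda>_::nat \<times> nat. borel :: real measure)) (Pi\<^sub>M UNIV (\<lambda>_. borel))"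
proof (rule measurable_PiM_single')
  show "(\<lambda>f. field_shift a b f k) \<in> borel_measurable (Pi\<^sub>M UNIV (\<lambda>_::nat \<times> nat. borel :: real measure))" for k
    by (cases k) (simp add: field_shift_def)
qed (auto simp: field_shift_def)

lemma strictly_stationary_field_measurable:
  "strictly_stationary_field M Y \<Longrightarrow> 1 \<le> i \<Longrightarrow> 1 \<le> t \<Longrightarrow> Y i t \<in> borel_measurable M"
  unfolding strictly_stationary_field_def by blast

lemma strictly_stationary_field_distr:
  assumes st: "strictly_stationary_field M Y" and "1 \<le> i" "1 \<le> t"
  shows "distr M borel (Y i t) = distr M borel (Y 1 1)"
proof -
  note meas = measurable_field_map[OF strictly_stationary_field_measurable[OF st]]
  have law: "field_law M Y = distr M (Pi\<^sub>M UNIV (\<lambda>_. borel)) (field_map Y)"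
    unfolding field_law_def field_map_def ..
  have coord: "distr M borel (Y (Suc a) (Suc b)) = distr (field_law M Y) borel (\<lambda>f. f (a, b))" for a b
  proof -
    have "distr (field_law M Y) borel (\<lambda>f. f (a, b)) = distr M borel ((\<lambda>f. f (a, b)) \<circ> field_map Y)"
      unfolding law by (rule distr_distr[OF measurable_component_field meas])
    also have "(\<lambda>f. f (a, b)) \<circ> field_map Y = Y (Suc a) (Suc b)"
      by (simp add: fun_eq_iff field_map_def)
    finally show ?thesis by simp
  qed
  obtain a b where ab: "i = Suc a" "t = Suc b" using assms by (metis Suc_pred' less_eq_Suc_le One_nat_def)
  \<comment> \<open>the coordinate (a, b) is the coordinate (0, 0) of the field shifted by (a, b)\<close>
  have "distr M borel (Y i t) = distr (field_law M Y) borel ((\<lambda>f. f (0, 0)) \<circ> field_shift a b)"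
    unfolding ab coord by (simp add: comp_def field_shift_def)
  also have "\<dots> = distr (distr (field_law M Y) (Pi\<^sub>M UNIV (\<lambda>_. borel)) (field_shift a b)) borel (\<lambda>f. f (0, 0))"
    by (rule distr_distr[symmetric]) (auto intro: measurable_field_shift simp: field_law_def)
  also have "\<dots> = distr M borel (Y 1 1)"
    using st coord[of 0 0] unfolding strictly_stationary_field_def by simp
  finally show ?thesis .
qed

context prob_space
begin

lemma integrable_abs_powr_smaller_exponent:
  fixes q Q :: real
  assumes [measurable]: "W \<in> borel_measurable M"
    and int: "integrable M (\<lambda>\<omega>. \<bar>W \<omega>\<bar> powr Q)" and "0 < q" "q \<le> Q"
  shows "integrable M (\<lambda>\<omega>. \<bar>W \<omega>\<bar> powr q)"
proof (rule Bochner_Integration.integrable_bound[where f="\<lambda>\<omega>. 1 + \<bar>W \<omega>\<bar> powr Q"])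
  have "\<bar>w\<bar> powr q \<le> 1 + \<bar>w\<bar> powr Q" for w :: real
  proof (cases "\<bar>w\<bar> \<le> 1")
    case True
    then have "\<bar>w\<bar> powr q \<le> 1" using powr_mono2[of q "\<bar>w\<bar>" 1] \<open>0 < q\<close> by simp
    then show ?thesis by (smt (verit) powr_ge_zero)
  next
    case False
    then show ?thesis using \<open>q \<le> Q\<close> powr_mono[of q Q "\<bar>w\<bar>"] by (smt (verit) powr_ge_zero)
  qed
  then show "AE \<omega> in M. norm (\<bar>W \<omega>\<bar> powr q) \<le> norm (1 + \<bar>W \<omega>\<bar> powr Q)"
    by (auto intro!: AE_I2 simp del: abs_of_nonneg) (smt (verit) powr_ge_zero)
qed (use int in auto)

lemma abs_tail_mult_lower:
  assumes [measurable]: "S \<in> borel_measurable M" "V \<in> borel_measurable M"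
    and nonneg: "\<And>\<omega>. \<omega> \<in> space M \<Longrightarrow> 0 \<le> S \<omega>"
    and indep: "indep_var borel V borel S" and "0 < s"
  shows "prob {\<omega> \<in> space M. s < S \<omega>} * abs_tail M V (x / s) \<le> abs_tail M (\<lambda>\<omega>. S \<omega> * V \<omega>) x"
proof -
  have "prob {\<omega> \<in> space M. s < S \<omega>} * abs_tail M V (x / s)
      = prob ((\<lambda>\<omega>. (V \<omega>, S \<omega>)) -` ({y. x / s < \<bar>y\<bar>} \<times> {y. s < y}) \<inter> space M)"
    using indep_varD[OF indep, of "{y. x / s < \<bar>y\<bar>}" "{y. s < y}"]
    by (simp add: abs_tail_def vimage_def Int_def conj_commute mult.commute)
  also have "\<dots> \<le> abs_tail M (\<lambda>\<omega>. S \<omega> * V \<omega>) x"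
    unfolding abs_tail_def
  proof (intro finite_measure_mono subsetI)
    fix \<omega> assume "\<omega> \<in> (\<lambda>\<omega>. (V \<omega>, S \<omega>)) -` ({y. x / s < \<bar>y\<bar>} \<times> {y. s < y}) \<inter> space M"
    then have \<omega>: "\<omega> \<in> space M" "x / s < \<bar>V \<omega>\<bar>" "s < S \<omega>" by auto
    have "x < s * \<bar>V \<omega>\<bar>" using \<omega>(2) \<open>0 < s\<close> by (simp add: pos_divide_less_eq mult.commute)
    also have "\<dots> \<le> S \<omega> * \<bar>V \<omega>\<bar>" using \<omega> by (intro mult_right_mono) auto
    finally show "\<omega> \<in> {\<omega> \<in> space M. x < \<bar>S \<omega> * V \<omega>\<bar>}"
      using \<omega> nonneg[OF \<omega>(1)] by (simp add: abs_mult)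
  qed simp
  finally show ?thesis .
qed

lemma not_AE_zero_of_norming:
  fixes a :: "nat \<Rightarrow> real"
  assumes [measurable]: "W \<in> borel_measurable M"
    and lim: "(\<lambda>n. real n * abs_tail M W (a n)) \<longlonglongrightarrow> 1"
  shows "\<not> (AE \<omega> in M. W \<omega> = 0)"
proof
  assume AE_zero: "AE \<omega> in M. W \<omega> = 0"
  have "abs_tail M W (a n) = prob {\<omega> \<in> space M. a n < 0}" for n
    unfolding abs_tail_def using AE_zero by (intro finite_measure_eq_AE) auto
  then have tail_values: "real n * abs_tail M W (a n) = (if a n < 0 then real n else 0)" for n
    by (simp add: prob_space)
  have "eventually (\<lambda>n. real n * abs_tail M W (a n) \<in> {1/2 <..< 3/2}) sequentially"
    using lim by (rule topological_tendstoD) auto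
  moreover have "eventually (\<lambda>n. 2 \<le> n) sequentially" by (rule eventually_ge_at_top)
  ultimately have "eventually (\<lambda>n. False) sequentially"
    by eventually_elim (auto simp: tail_values split: if_splits)
  then show False by simp
qed

lemma exists_level_prob_pos:
  fixes S :: "'a \<Rightarrow> real"
  assumes [measurable]: "S \<in> borel_measurable M"
    and nonneg: "\<And>\<omega>. \<omega> \<in> space M \<Longrightarrow> 0 \<le> S \<omega>" and not_zero: "\<not> (AE \<omega> in M. S \<omega> = 0)"
  shows "\<exists>s>0. 0 < prob {\<omega> \<in> space M. s < S \<omega>}"
proof (rule ccontr)
  assume "\<not> (\<exists>s>0. 0 < prob {\<omega> \<in> space M. s < S \<omega>})"
  then have null: "prob {\<omega> \<in> space M. s < S \<omega>} = 0" if "0 < s" for s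
    using measure_nonneg[of M "{\<omega> \<in> space M. s < S \<omega>}"] that by (meson not_less order_antisym)
  have "AE \<omega> in M. \<forall>k::nat. S \<omega> \<le> inverse (real (Suc k))"
  proof (subst AE_all_countable, intro allI)
    fix k :: nat
    have "{\<omega> \<in> space M. inverse (real (Suc k)) < S \<omega>} \<in> null_sets M"
      using null[of "inverse (real (Suc k))"] by (auto simp: emeasure_eq_measure null_sets_def)
    from AE_not_in[OF this] show "AE \<omega> in M. S \<omega> \<le> inverse (real (Suc k))"
      by (rule AE_mp) (auto intro!: AE_I2)
  qed
  then have "AE \<omega> in M. S \<omega> = 0"
  proof (rule AE_mp, intro AE_I2 impI)
    fix \<omega> assume \<omega>: "\<omega> \<in> space M" and small: "\<forall>k::nat. S \<omega> \<le> inverse (real (Suc k))"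
    show "S \<omega> = 0"
    proof (rule ccontr)
      assume "S \<omega> \<noteq> 0"
      then have "0 < S \<omega>" using nonneg[OF \<omega>] by simp
      then obtain k where "inverse (real (Suc k)) < S \<omega>" using reals_Archimedean by blast
      then show False using small by (meson not_le)
    qed
  qed
  then show False using not_zero by simp
qed

end

locale sv_field = prob_space +
  fixes \<sigma> Z :: "nat \<Rightarrow> nat \<Rightarrow> 'a \<Rightarrow> real"
  assumes iid_Z: "iid_field M Z"
    and stationary: "strictly_stationary_field M \<sigma>"
    and nonneg: "\<And>i t \<omega>. 1 \<le> i \<Longrightarrow> 1 \<le> t \<Longrightarrow> \<omega> \<in> space M \<Longrightarrow> 0 \<le> \<sigma> i t \<omega>"
    and indep_fields: "indep_var (Pi\<^sub>M UNIV (\<lambda>_. borel)) (field_map Z) (Pi\<^sub>M UNIV (\<lambda>_. borel)) (field_map \<sigma>)"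
begin

lemmas Z_measurable [measurable] = iid_field_measurable[OF iid_Z prob_space_axioms]
lemmas sigma_measurable [measurable] = strictly_stationary_field_measurable[OF stationary]

lemma indep_var_field_functionals:
  assumes "F \<in> borel_measurable (Pi\<^sub>M UNIV (\<lambda>_::nat \<times> nat. borel :: real measure))"
    and "G \<in> borel_measurable (Pi\<^sub>M UNIV (\<lambda>_::nat \<times> nat. borel :: real measure))"
  shows "indep_var borel (\<lambda>\<omega>. F (field_map Z \<omega>)) borel (\<lambda>\<omega>. G (field_map \<sigma> \<omega>))"
  using indep_var_compose[OF indep_fields assms] by (simp add: comp_def)

lemma sigma_product_moment:
  assumes "1 \<le> i" "1 \<le> j" "1 \<le> t" "0 < q" and int: "integrable M (\<lambda>\<omega>. \<bar>\<sigma> 1 1 \<omega>\<bar> powr (2 * q))"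
  shows "integrable M (\<lambda>\<omega>. \<bar>\<sigma> i t \<omega> * \<sigma> j t \<omega>\<bar> powr q)"
    and "(\<integral>\<omega>. \<bar>\<sigma> i t \<omega> * \<sigma> j t \<omega>\<bar> powr q \<partial>M) \<le> (\<integral>\<omega>. \<bar>\<sigma> 1 1 \<omega>\<bar> powr (2 * q) \<partial>M)"
proof -
  have same_law: "integrable M (\<lambda>\<omega>. \<bar>\<sigma> k t \<omega>\<bar> powr (2 * q))"
      "(\<integral>\<omega>. \<bar>\<sigma> k t \<omega>\<bar> powr (2 * q) \<partial>M) = (\<integral>\<omega>. \<bar>\<sigma> 1 1 \<omega>\<bar> powr (2 * q) \<partial>M)" if "1 \<le> k" for k
    using integral_eq_of_distr_eq[OF strictly_stationary_field_distr[OF stationary that \<open>1 \<le> t\<close>] _ _ _ int]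
      that assms by simp_all
  show "integrable M (\<lambda>\<omega>. \<bar>\<sigma> i t \<omega> * \<sigma> j t \<omega>\<bar> powr q)"
    using same_law assms by (intro integrable_abs_mult_powr(1)) auto
  show "(\<integral>\<omega>. \<bar>\<sigma> i t \<omega> * \<sigma> j t \<omega>\<bar> powr q \<partial>M) \<le> (\<integral>\<omega>. \<bar>\<sigma> 1 1 \<omega>\<bar> powr (2 * q) \<partial>M)"
    using integrable_abs_mult_powr(2)[of "\<sigma> i t" M "\<sigma> j t" q] same_law[of i] same_law[of j] assms
    by simp
qed

lemma sv_product_moment:
  assumes ij: "1 \<le> i" "1 \<le> j" "1 \<le> t" "i \<noteq> j" and "0 < q"
    and Z_int: "integrable M (\<lambda>\<omega>. \<bar>Z 1 1 \<omega>\<bar> powr q)"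
    and sigma_int: "integrable M (\<lambda>\<omega>. \<bar>\<sigma> 1 1 \<omega>\<bar> powr (2 * q))"
  shows "integrable M (\<lambda>\<omega>. \<bar>\<sigma> i t \<omega> * Z i t \<omega> * (\<sigma> j t \<omega> * Z j t \<omega>)\<bar> powr q)"
    and "(\<integral>\<omega>. \<bar>\<sigma> i t \<omega> * Z i t \<omega> * (\<sigma> j t \<omega> * Z j t \<omega>)\<bar> powr q \<partial>M)
           \<le> (\<integral>\<omega>. \<bar>Z 1 1 \<omega>\<bar> powr q \<partial>M)\<^sup>2 * (\<integral>\<omega>. \<bar>\<sigma> 1 1 \<omega>\<bar> powr (2 * q) \<partial>M)"
proof -
  define F where "F f = \<bar>f (i - 1, t - 1)\<bar> powr q * \<bar>f (j - 1, t - 1)\<bar> powr q" for f :: "nat \<times> nat \<Rightarrow> real"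
  define G where "G f = \<bar>f (i - 1, t - 1) * f (j - 1, t - 1)\<bar> powr q" for f :: "nat \<times> nat \<Rightarrow> real"
  have "indep_var borel (\<lambda>\<omega>. F (field_map Z \<omega>)) borel (\<lambda>\<omega>. G (field_map \<sigma> \<omega>))"
    by (rule indep_var_field_functionals) (simp_all add: F_def G_def)
  then have indep: "indep_var borel (\<lambda>\<omega>. \<bar>Z i t \<omega>\<bar> powr q * \<bar>Z j t \<omega>\<bar> powr q)
      borel (\<lambda>\<omega>. \<bar>\<sigma> i t \<omega> * \<sigma> j t \<omega>\<bar> powr q)"
    using ij by (simp add: F_def G_def field_map_def)
  note Z_moment = iid_field_product_moment[OF iid_Z prob_space_axioms ij, of "\<lambda>x. \<bar>x\<bar> powr q"]
  note sigma_moment = sigma_product_moment[OF ij(1-3) \<open>0 < q\<close> sigma_int]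
  have split: "\<bar>\<sigma> i t \<omega> * Z i t \<omega> * (\<sigma> j t \<omega> * Z j t \<omega>)\<bar> powr q
      = (\<bar>Z i t \<omega>\<bar> powr q * \<bar>Z j t \<omega>\<bar> powr q) * \<bar>\<sigma> i t \<omega> * \<sigma> j t \<omega>\<bar> powr q" for \<omega>
    by (simp add: abs_mult powr_mult ac_simps)
  show "integrable M (\<lambda>\<omega>. \<bar>\<sigma> i t \<omega> * Z i t \<omega> * (\<sigma> j t \<omega> * Z j t \<omega>)\<bar> powr q)"
    unfolding split using indep_var_integrable[OF indep] Z_moment Z_int sigma_moment by simp
  have "(\<integral>\<omega>. \<bar>\<sigma> i t \<omega> * Z i t \<omega> * (\<sigma> j t \<omega> * Z j t \<omega>)\<bar> powr q \<partial>M)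
      = (\<integral>\<omega>. \<bar>Z 1 1 \<omega>\<bar> powr q \<partial>M)\<^sup>2 * (\<integral>\<omega>. \<bar>\<sigma> i t \<omega> * \<sigma> j t \<omega>\<bar> powr q \<partial>M)"
    unfolding split using indep_var_lebesgue_integral[OF indep] Z_moment Z_int sigma_moment by simp
  also have "\<dots> \<le> (\<integral>\<omega>. \<bar>Z 1 1 \<omega>\<bar> powr q \<partial>M)\<^sup>2 * (\<integral>\<omega>. \<bar>\<sigma> 1 1 \<omega>\<bar> powr (2 * q) \<partial>M)"
    using sigma_moment by (intro mult_left_mono) auto
  finally show "(\<integral>\<omega>. \<bar>\<sigma> i t \<omega> * Z i t \<omega> * (\<sigma> j t \<omega> * Z j t \<omega>)\<bar> powr q \<partial>M)
      \<le> (\<integral>\<omega>. \<bar>Z 1 1 \<omega>\<bar> powr q \<partial>M)\<^sup>2 * (\<integral>\<omega>. \<bar>\<sigma> 1 1 \<omega>\<bar> powr (2 * q) \<partial>M)" .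
qed

lemma sv_product_orthogonal:
  assumes ij: "1 \<le> i" "1 \<le> j" "1 \<le> t" "1 \<le> s" "i \<noteq> j" "t \<noteq> s"
    and Z_int: "integrable M (Z 1 1)" and Z_mean: "(\<integral>\<omega>. Z 1 1 \<omega> \<partial>M) = 0"
    and sigma_int: "integrable M (\<lambda>\<omega>. \<bar>\<sigma> 1 1 \<omega>\<bar> powr 4)"
  shows "(\<integral>\<omega>. (\<sigma> i t \<omega> * Z i t \<omega> * (\<sigma> j t \<omega> * Z j t \<omega>)) * (\<sigma> i s \<omega> * Z i s \<omega> * (\<sigma> j s \<omega> * Z j s \<omega>)) \<partial>M) = 0"
proof -
  define F where "F f = f (i - 1, t - 1) * f (j - 1, t - 1) * (f (i - 1, s - 1) * f (j - 1, s - 1))"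
    for f :: "nat \<times> nat \<Rightarrow> real"
  have "indep_var borel (\<lambda>\<omega>. F (field_map Z \<omega>)) borel (\<lambda>\<omega>. F (field_map \<sigma> \<omega>))"
    by (rule indep_var_field_functionals) (simp_all add: F_def)
  then have indep: "indep_var borel (\<lambda>\<omega>. Z i t \<omega> * Z j t \<omega> * (Z i s \<omega> * Z j s \<omega>))
      borel (\<lambda>\<omega>. \<sigma> i t \<omega> * \<sigma> j t \<omega> * (\<sigma> i s \<omega> * \<sigma> j s \<omega>))"
    using ij by (simp add: F_def field_map_def)
  have Z_centred: "integrable M (\<lambda>\<omega>. Z i u \<omega> * Z j u \<omega>)" "(\<integral>\<omega>. Z i u \<omega> * Z j u \<omega> \<partial>M) = 0"
    if "1 \<le> u" for u
    using iid_field_product_moment[OF iid_Z prob_space_axioms ij(1,2) that ij(5), of "\<lambda>x. x"]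
      Z_int Z_mean by simp_all
  have Z_indep: "indep_var borel (\<lambda>\<omega>. Z i t \<omega> * Z j t \<omega>) borel (\<lambda>\<omega>. Z i s \<omega> * Z j s \<omega>)"
    using ij by (intro iid_field_indep_var_mult[OF iid_Z prob_space_axioms])
  note Z_t = Z_centred[OF \<open>1 \<le> t\<close>] and Z_s = Z_centred[OF \<open>1 \<le> s\<close>]
  have Z_part: "integrable M (\<lambda>\<omega>. Z i t \<omega> * Z j t \<omega> * (Z i s \<omega> * Z j s \<omega>))"
      "(\<integral>\<omega>. Z i t \<omega> * Z j t \<omega> * (Z i s \<omega> * Z j s \<omega>) \<partial>M) = 0"
    using indep_var_integrable[OF Z_indep Z_t(1) Z_s(1)]
      indep_var_lebesgue_integral[OF Z_indep Z_t(1) Z_s(1)] Z_t(2) by simp_all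
  have "integrable M (\<lambda>\<omega>. (\<sigma> i u \<omega> * \<sigma> j u \<omega>)\<^sup>2)" if "1 \<le> u" for u
    using sigma_product_moment(1)[of i j u 2] ij that sigma_int by (simp add: abs_powr_two)
  then have sigma_part: "integrable M (\<lambda>\<omega>. \<sigma> i t \<omega> * \<sigma> j t \<omega> * (\<sigma> i s \<omega> * \<sigma> j s \<omega>))"
    using ij by (intro integrable_mult_of_square_integrable) auto
  have "(\<lambda>\<omega>. (\<sigma> i t \<omega> * Z i t \<omega> * (\<sigma> j t \<omega> * Z j t \<omega>)) * (\<sigma> i s \<omega> * Z i s \<omega> * (\<sigma> j s \<omega> * Z j s \<omega>)))
      = (\<lambda>\<omega>. (Z i t \<omega> * Z j t \<omega> * (Z i s \<omega> * Z j s \<omega>)) * (\<sigma> i t \<omega> * \<sigma> j t \<omega> * (\<sigma> i s \<omega> * \<sigma> j s \<omega>)))"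
    by (simp add: fun_eq_iff ac_simps)
  then show ?thesis
    using indep_var_lebesgue_integral[OF indep Z_part(1) sigma_part] Z_part(2) by simp
qed

lemma sv_abs_tail_lower:
  fixes a :: "nat \<Rightarrow> real"
  assumes rv: "regularly_varying M (Z 1 1) \<alpha>" and "0 < \<alpha>" "\<alpha> < \<beta>"
    and lim: "(\<lambda>n. real n * abs_tail M (\<lambda>\<omega>. \<sigma> 1 1 \<omega> * Z 1 1 \<omega>) (a n)) \<longlonglongrightarrow> 1"
  shows "\<exists>c>0. \<exists>x0>0. \<forall>x\<ge>x0. c * x powr -\<beta> \<le> abs_tail M (\<lambda>\<omega>. \<sigma> 1 1 \<omega> * Z 1 1 \<omega>) x"
proof -
  have "indep_var borel (\<lambda>\<omega>. field_map Z \<omega> (0, 0)) borel (\<lambda>\<omega>. field_map \<sigma> \<omega> (0, 0))"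
    by (rule indep_var_field_functionals) simp_all
  then have indep: "indep_var borel (Z 1 1) borel (\<sigma> 1 1)" by (simp add: field_map_def)
  \<comment> \<open>the volatility cannot vanish almost surely, or the product would have no tail at all\<close>
  have "\<not> (AE \<omega> in M. \<sigma> 1 1 \<omega> = 0)"
  proof
    assume "AE \<omega> in M. \<sigma> 1 1 \<omega> = 0"
    then have "AE \<omega> in M. \<sigma> 1 1 \<omega> * Z 1 1 \<omega> = 0" by eventually_elim simp
    then show False using not_AE_zero_of_norming[OF _ lim] by simp
  qed
  then obtain s where "0 < s" and ps: "0 < prob {\<omega> \<in> space M. s < \<sigma> 1 1 \<omega>}"
    using exists_level_prob_pos[of "\<sigma> 1 1"] nonneg by auto
  obtain c x0 where "0 < c" "0 < x0" and low: "\<forall>x\<ge>x0. c * x powr -\<beta> \<le> abs_tail M (Z 1 1) x"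
    using abs_tail_regularly_varying_lower[OF rv \<open>\<alpha> < \<beta>\<close>] assms by auto
  define c' where "c' = prob {\<omega> \<in> space M. s < \<sigma> 1 1 \<omega>} * c * s powr \<beta>"
  have "\<forall>x\<ge>s * x0. c' * x powr -\<beta> \<le> abs_tail M (\<lambda>\<omega>. \<sigma> 1 1 \<omega> * Z 1 1 \<omega>) x"
  proof (intro allI impI)
    fix x assume "s * x0 \<le> x"
    have "0 < x" using \<open>s * x0 \<le> x\<close> \<open>0 < s\<close> \<open>0 < x0\<close> by (smt (verit) mult_pos_pos)
    have "c' * x powr -\<beta> = prob {\<omega> \<in> space M. s < \<sigma> 1 1 \<omega>} * (c * (x / s) powr -\<beta>)"
      using \<open>0 < s\<close> \<open>0 < x\<close> by (simp add: c'_def powr_divide powr_minus field_simps)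
    also have "\<dots> \<le> prob {\<omega> \<in> space M. s < \<sigma> 1 1 \<omega>} * abs_tail M (Z 1 1) (x / s)"
      using low \<open>s * x0 \<le> x\<close> \<open>0 < s\<close> by (intro mult_left_mono) (auto simp: field_simps)
    also have "\<dots> \<le> abs_tail M (\<lambda>\<omega>. \<sigma> 1 1 \<omega> * Z 1 1 \<omega>) x"
      using nonneg \<open>0 < s\<close> by (intro abs_tail_mult_lower indep) auto
    finally show "c' * x powr -\<beta> \<le> abs_tail M (\<lambda>\<omega>. \<sigma> 1 1 \<omega> * Z 1 1 \<omega>) x" .
  qed
  moreover have "0 < c'" "0 < s * x0" using ps \<open>0 < c\<close> \<open>0 < s\<close> \<open>0 < x0\<close> by (simp_all add: c'_def)
  ultimately show ?thesis by blast
qed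

lemma sv_cross_sum_bound_powr:
  assumes ij: "1 \<le> i" "1 \<le> j" "i \<noteq> j" and r: "0 < r" "r \<le> 1" and "0 < b"
    and Z_int: "integrable M (\<lambda>\<omega>. \<bar>Z 1 1 \<omega>\<bar> powr r)"
    and sigma_int: "integrable M (\<lambda>\<omega>. \<bar>\<sigma> 1 1 \<omega>\<bar> powr (2 * r))"
  shows "prob {\<omega> \<in> space M. b < \<bar>\<Sum>t=1..n. \<sigma> i t \<omega> * Z i t \<omega> * (\<sigma> j t \<omega> * Z j t \<omega>)\<bar>}
           \<le> (\<integral>\<omega>. \<bar>Z 1 1 \<omega>\<bar> powr r \<partial>M)\<^sup>2 * (\<integral>\<omega>. \<bar>\<sigma> 1 1 \<omega>\<bar> powr (2 * r) \<partial>M) * real n / b powr r"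
proof -
  define C where "C = (\<integral>\<omega>. \<bar>Z 1 1 \<omega>\<bar> powr r \<partial>M)\<^sup>2 * (\<integral>\<omega>. \<bar>\<sigma> 1 1 \<omega>\<bar> powr (2 * r) \<partial>M)"
  define Y where "Y t = (\<lambda>\<omega>. \<sigma> i t \<omega> * Z i t \<omega> * (\<sigma> j t \<omega> * Z j t \<omega>))" for t
  have "prob {\<omega> \<in> space M. b < \<bar>\<Sum>t\<in>{1..n}. Y t \<omega>\<bar>} \<le> real (card {1..n}) * C / b powr r"
  proof (rule prob_abs_sum_gt_le_powr)
    fix t assume "t \<in> {1..n}"
    then have "1 \<le> t" by simp
    note moment = sv_product_moment[OF ij(1,2) this ij(3) r(1) Z_int sigma_int]
    show "Y t \<in> borel_measurable M" unfolding Y_def using ij \<open>1 \<le> t\<close> by simp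
    show "integrable M (\<lambda>\<omega>. \<bar>Y t \<omega>\<bar> powr r)" unfolding Y_def using moment(1) .
    show "(\<integral>\<omega>. \<bar>Y t \<omega>\<bar> powr r \<partial>M) \<le> C" unfolding Y_def C_def using moment(2) .
  qed (use r \<open>0 < b\<close> in simp_all)
  then show ?thesis by (simp add: Y_def C_def mult.commute)
qed

lemma sv_cross_sum_bound_square:
  assumes ij: "1 \<le> i" "1 \<le> j" "i \<noteq> j" and "0 < b"
    and Z_int: "integrable M (Z 1 1)" "integrable M (\<lambda>\<omega>. \<bar>Z 1 1 \<omega>\<bar> powr 2)"
    and Z_mean: "(\<integral>\<omega>. Z 1 1 \<omega> \<partial>M) = 0"
    and sigma_int: "integrable M (\<lambda>\<omega>. \<bar>\<sigma> 1 1 \<omega>\<bar> powr 4)"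
  shows "prob {\<omega> \<in> space M. b < \<bar>\<Sum>t=1..n. \<sigma> i t \<omega> * Z i t \<omega> * (\<sigma> j t \<omega> * Z j t \<omega>)\<bar>}
           \<le> (\<integral>\<omega>. \<bar>Z 1 1 \<omega>\<bar> powr 2 \<partial>M)\<^sup>2 * (\<integral>\<omega>. \<bar>\<sigma> 1 1 \<omega>\<bar> powr 4 \<partial>M) * real n / b powr 2"
proof -
  define C where "C = (\<integral>\<omega>. \<bar>Z 1 1 \<omega>\<bar> powr 2 \<partial>M)\<^sup>2 * (\<integral>\<omega>. \<bar>\<sigma> 1 1 \<omega>\<bar> powr 4 \<partial>M)"
  define Y where "Y t = (\<lambda>\<omega>. \<sigma> i t \<omega> * Z i t \<omega> * (\<sigma> j t \<omega> * Z j t \<omega>))" for t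
  have "prob {\<omega> \<in> space M. b < \<bar>\<Sum>t\<in>{1..n}. Y t \<omega>\<bar>} \<le> real (card {1..n}) * C / b\<^sup>2"
  proof (rule prob_abs_sum_gt_le_orthogonal)
    fix t assume "t \<in> {1..n}"
    then have "1 \<le> t" by simp
    note moment = sv_product_moment[OF ij(1,2) this ij(3), of 2, unfolded abs_powr_two]
    show "Y t \<in> borel_measurable M" unfolding Y_def using ij \<open>1 \<le> t\<close> by simp
    show "integrable M (\<lambda>\<omega>. (Y t \<omega>)\<^sup>2)"
      unfolding Y_def using moment(1) Z_int(2) sigma_int by (simp add: abs_powr_two)
    show "(\<integral>\<omega>. (Y t \<omega>)\<^sup>2 \<partial>M) \<le> C"
      unfolding Y_def C_def using moment(2) Z_int(2) sigma_int by (simp add: abs_powr_two)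
  next
    fix t s assume "t \<in> {1..n}" "s \<in> {1..n}" "t \<noteq> s"
    then show "(\<integral>\<omega>. Y t \<omega> * Y s \<omega> \<partial>M) = 0"
      unfolding Y_def using sv_product_orthogonal[OF ij(1,2) _ _ ij(3) _ Z_int(1) Z_mean sigma_int]
      by simp
  qed (use \<open>0 < b\<close> in simp_all)
  then show ?thesis using \<open>0 < b\<close> by (simp add: Y_def C_def mult.commute)
qed

end

lemma (in prob_space) sv_modelE:
  assumes "sv_model M p X"
  obtains \<sigma> Z \<alpha> Q where "X = (\<lambda>i t \<omega>. \<sigma> i t \<omega> * Z i t \<omega>)" and "sv_field M \<sigma> Z"
    and "integrable M (Z 1 1) \<Longrightarrow> (\<integral>\<omega>. Z 1 1 \<omega> \<partial>M) = 0"
    and "0 < \<alpha>" "\<alpha> < 4" "\<alpha> \<noteq> 2" "regularly_varying M (Z 1 1) \<alpha>"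
    and "4 \<le> Q" "integrable M (\<lambda>\<omega>. \<bar>\<sigma> 1 1 \<omega>\<bar> powr Q)"
proof -
  obtain \<sigma> Z where X: "\<And>i t \<omega>. X i t \<omega> = \<sigma> i t \<omega> * Z i t \<omega>"
    and iid: "iid_field M Z" and stationary: "strictly_stationary_field M \<sigma>"
    and nonneg: "\<And>i t \<omega>. 1 \<le> i \<Longrightarrow> 1 \<le> t \<Longrightarrow> \<omega> \<in> space M \<Longrightarrow> 0 \<le> \<sigma> i t \<omega>"
    and indep: "indep_var (Pi\<^sub>M UNIV (\<lambda>_. borel)) (field_map Z) (Pi\<^sub>M UNIV (\<lambda>_. borel)) (field_map \<sigma>)"
    and mean: "integrable M (Z 1 1) \<Longrightarrow> (\<integral>\<omega>. Z 1 1 \<omega> \<partial>M) = 0"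
    and tail: "\<exists>\<alpha>. 0 < \<alpha> \<and> \<alpha> < 4 \<and> \<alpha> \<noteq> 2 \<and> regularly_varying M (Z 1 1) \<alpha> \<and>
          (\<exists>\<delta> > 0. (\<exists>\<alpha>h. strongly_mixing_rate M \<sigma> p \<alpha>h \<and> summable (\<lambda>h. \<alpha>h (Suc h) powr (\<delta> / (2 + \<delta>)))) \<and>
             (\<exists>\<epsilon> > 0. integrable M (\<lambda>\<omega>. \<sigma> 1 1 \<omega> powr (2 * max (2 + \<delta>) (\<alpha> + \<epsilon>)))))"
    using assms unfolding sv_model_def field_map_def by blast
  obtain \<alpha> \<delta> \<epsilon> where \<alpha>: "0 < \<alpha>" "\<alpha> < 4" "\<alpha> \<noteq> 2" "regularly_varying M (Z 1 1) \<alpha>"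
    and "0 < \<delta>" and sigma_int: "integrable M (\<lambda>\<omega>. \<sigma> 1 1 \<omega> powr (2 * max (2 + \<delta>) (\<alpha> + \<epsilon>)))"
    using tail by blast
  have "integrable M (\<lambda>\<omega>. \<bar>\<sigma> 1 1 \<omega>\<bar> powr (2 * max (2 + \<delta>) (\<alpha> + \<epsilon>)))
      \<longleftrightarrow> integrable M (\<lambda>\<omega>. \<sigma> 1 1 \<omega> powr (2 * max (2 + \<delta>) (\<alpha> + \<epsilon>)))"
    using nonneg[of 1 1] by (intro Bochner_Integration.integrable_cong) auto
  then have "integrable M (\<lambda>\<omega>. \<bar>\<sigma> 1 1 \<omega>\<bar> powr (2 * max (2 + \<delta>) (\<alpha> + \<epsilon>)))"
    using sigma_int by simp
  moreover have "X = (\<lambda>i t \<omega>. \<sigma> i t \<omega> * Z i t \<omega>)" using X by (intro ext) simp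
  moreover have "sv_field M \<sigma> Z" using iid stationary nonneg indep by unfold_locales
  moreover have "4 \<le> 2 * max (2 + \<delta>) (\<alpha> + \<epsilon>)" using \<open>0 < \<delta>\<close> by simp
  ultimately show ?thesis using that[of \<sigma> Z \<alpha> "2 * max (2 + \<delta>) (\<alpha> + \<epsilon>)"] mean \<alpha> by blast
qed

lemma (in prob_space) sv_model_measurable:
  assumes "sv_model M p X" "1 \<le> i" "1 \<le> t"
  shows "X i t \<in> borel_measurable M"
proof -
  obtain \<sigma> Z where "X = (\<lambda>i t \<omega>. \<sigma> i t \<omega> * Z i t \<omega>)" and "sv_field M \<sigma> Z"
    using assms(1) by (rule sv_modelE)
  then interpret sv_field M \<sigma> Z by simp
  show ?thesis using \<open>X = _\<close> assms by simp
qed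

lemma (in prob_space) sv_model_cross_sum_tendsto_zero:
  fixes X :: "nat \<Rightarrow> nat \<Rightarrow> 'a \<Rightarrow> real" and a :: "nat \<Rightarrow> real"
  assumes sv: "sv_model M p X" and lim: "(\<lambda>n. real n * abs_tail M (X 1 1) (a n)) \<longlonglongrightarrow> 1"
    and ij: "1 \<le> i" "1 \<le> j" "i \<noteq> j" and "0 < \<epsilon>"
  shows "(\<lambda>n. prob {\<omega> \<in> space M. \<epsilon> * (a n)\<^sup>2 < \<bar>\<Sum>t=1..n. X i t \<omega> * X j t \<omega>\<bar>}) \<longlonglongrightarrow> 0"
proof -
  obtain \<sigma> Z \<alpha> Q where X: "X = (\<lambda>i t \<omega>. \<sigma> i t \<omega> * Z i t \<omega>)" and "sv_field M \<sigma> Z"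
    and mean: "integrable M (Z 1 1) \<Longrightarrow> (\<integral>\<omega>. Z 1 1 \<omega> \<partial>M) = 0"
    and \<alpha>: "0 < \<alpha>" "\<alpha> < 4" "\<alpha> \<noteq> 2" and rv: "regularly_varying M (Z 1 1) \<alpha>"
    and "4 \<le> Q" and sigma_Q: "integrable M (\<lambda>\<omega>. \<bar>\<sigma> 1 1 \<omega>\<bar> powr Q)"
    using sv by (rule sv_modelE) (rule that)
  interpret sv_field M \<sigma> Z by fact
  have sigma_int: "integrable M (\<lambda>\<omega>. \<bar>\<sigma> 1 1 \<omega>\<bar> powr q)" if "0 < q" "q \<le> Q" for q
    using that sigma_Q by (intro integrable_abs_powr_smaller_exponent[of "\<sigma> 1 1" Q q]) simp_all
  have lim': "(\<lambda>n. real n * abs_tail M (\<lambda>\<omega>. \<sigma> 1 1 \<omega> * Z 1 1 \<omega>) (a n)) \<longlonglongrightarrow> 1"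
    using lim unfolding X .
  have lower: "\<forall>\<beta>>\<alpha>. \<exists>c>0. \<exists>x0>0. \<forall>x\<ge>x0. c * x powr -\<beta> \<le> abs_tail M (\<lambda>\<omega>. \<sigma> 1 1 \<omega> * Z 1 1 \<omega>) x"
    using sv_abs_tail_lower[OF rv \<open>0 < \<alpha>\<close> _ lim'] by blast
  have "(\<lambda>\<omega>. \<sigma> 1 1 \<omega> * Z 1 1 \<omega>) \<in> borel_measurable M" by simp
  note cross_sum_tendsto_zero = prob_abs_gt_norming_sq_tendsto_zero[OF this lower lim']
  show ?thesis
  proof (cases "\<alpha> < 2")
    case True
    define r where "r = min 1 (3 * \<alpha> / 4)"
    have r: "0 < r" "r \<le> 1" "r < \<alpha>" "\<alpha> < 2 * r" "2 * r \<le> Q"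
      using \<alpha> True \<open>4 \<le> Q\<close> by (auto simp: r_def)
    show ?thesis
      unfolding X using r \<open>0 < \<epsilon>\<close>
        sv_cross_sum_bound_powr[OF ij r(1,2) _ integrable_abs_powr_regularly_varying[OF rv r(1,3)]
          sigma_int[of "2 * r"]]
      by (intro cross_sum_tendsto_zero) auto
  next
    case False
    then have "2 < \<alpha>" using \<alpha> by simp
    have "integrable M (\<lambda>\<omega>. \<bar>Z 1 1 \<omega>\<bar> powr 1)"
      using integrable_abs_powr_regularly_varying[OF rv, of 1] \<open>2 < \<alpha>\<close> by simp
    then have Z_int: "integrable M (Z 1 1)" by (simp add: integrable_abs_iff)
    have Z_2: "integrable M (\<lambda>\<omega>. \<bar>Z 1 1 \<omega>\<bar> powr 2)"
      using integrable_abs_powr_regularly_varying[OF rv, of 2] \<open>2 < \<alpha>\<close> by simp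
    have sigma_4: "integrable M (\<lambda>\<omega>. \<bar>\<sigma> 1 1 \<omega>\<bar> powr 4)"
      using sigma_int[of 4] \<open>4 \<le> Q\<close> by simp
    show ?thesis
      unfolding X using \<alpha> \<open>0 < \<epsilon>\<close>
        cross_sum_tendsto_zero[OF sv_cross_sum_bound_square[OF ij _ Z_int Z_2 mean[OF Z_int] sigma_4]]
      by simp
  qed
qed

theorem theorem3p6:
  fixes M :: "'a measure" and p :: nat
    and X :: "nat \<Rightarrow> nat \<Rightarrow> 'a \<Rightarrow> real" and a :: "nat \<Rightarrow> real"
  assumes "prob_space M"
    and "p \<ge> 1"
    and "iid_model M X \<or> sv_model M p X"
    and "(\<lambda>n. real n * measure M {\<omega> \<in> space M. \<bar>X 1 1 \<omega>\<bar> > a n}) \<longlonglongrightarrow> 1"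
  shows "tendsto_in_prob_zero M
           (\<lambda>n \<omega>. spectral_norm p
                    (\<lambda>i j. if i = j then 0 else (\<Sum>t=1..n. X i t \<omega> * X j t \<omega>)) / (a n)\<^sup>2)"
proof -
  interpret prob_space M by fact
  have lim: "(\<lambda>n. real n * abs_tail M (X 1 1) (a n)) \<longlonglongrightarrow> 1"
    using assms(4) unfolding abs_tail_def .
  have X_measurable: "X i t \<in> borel_measurable M" if "1 \<le> i" "1 \<le> t" for i t
    using assms(3) iid_model_measurable sv_model_measurable that by blast
  have entries: "(\<lambda>n. prob {\<omega> \<in> space M. \<epsilon> * (a n)\<^sup>2 < \<bar>\<Sum>t=1..n. X i t \<omega> * X j t \<omega>\<bar>}) \<longlonglongrightarrow> 0"
    if "1 \<le> i" "1 \<le> j" "i \<noteq> j" "0 < \<epsilon>" for i j \<epsilon>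
    using assms(3) iid_model_cross_sum_tendsto_zero[of X a, OF _ lim that]
      sv_model_cross_sum_tendsto_zero[of p X a, OF _ lim that] by blast
  show ?thesis
    by (rule tendsto_in_prob_zero_offdiag_spectral_norm[OF assms(2)]) (use X_measurable entries in auto)
qed

end
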